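(* Let $Q$ be a finite connected acyclic quiver and let $\alpha_1,\dots,\alpha_r$ be pairwise ext-orthogonal positive Schur roots. Let $\alpha_1'\neq\alpha_1$ be a positive Schur root which is ext-orthogonal to each of $\alpha_2,\dots,\alpha_r$, and assume $\operatorname{ext}(\alpha_1,\alpha_1')\neq0$. Then every Schur root $d_j$ occurring in the generic decomposition $\alpha_1+\alpha_1'=d_1\oplus\cdots\oplus d_s$ is different from both $\alpha_1$ and $\alpha_1'$ and is ext-orthogonal to each of $\alpha_2,\dots,\alpha_r$.
   Context: $k$ is an algebraically closed field of characteristic $0$, $Q$ has vertex set $Q_0=\{1,\dots,n\}$. For $a,b\in\mathbb{N}^n$, $\operatorname{ext}(a,b)$ is the generic (minimal) value of $\dim\operatorname{Ext}^1_{kQ}(M,N)$ over representations of dimension vectors $a,b$; $a,b$ are ext-orthogonal if $\operatorname{ext}(a,b)=\operatorname{ext}(b,a)=0$. A (positive) Schur root is a nonzero $d\in\mathbb{N}^n$ for which some representation of dimension vector $d$ has endomorphism ring $k$. Generic decomposition (Kac): every $d\in\mathbb{N}^n$ has a unique decomposition $d=d_1\oplus\cdots\oplus d_s$ (a sum, with multiplicities) into Schur roots such that direct sums of representations of dimension vectors $d_1,\dots,d_s$ form a dense open subset of the representations of dimension vector $d$; equivalently, $\operatorname{ext}(d_i,d_j)=0$ for all $i\neq j$. *)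

theory Defs
  imports Main "HOL-Library.Function_Algebras" "HOL-Computational_Algebra.Polynomial"
begin

(* A quiver Q is given by a number n of vertices (vertex set {0..<n}) and a list
   arr of arrows; arrow number a (a < length arr) goes from fst (arr!a) to snd (arr!a).
   Multiple arrows are allowed (repeated list entries).
   A representation of dimension vector d is M :: nat => nat => nat => 'k, where
   M a i j is entry (i,j) of the (d (target) x d (source)) matrix of arrow a;
   entries outside the range are required to be 0.
   Families of linear maps (phi_v : k^{a v} -> k^{b v})_v are encoded the same way
   (phi v i j = entry (i,j) of a (b v x a v) matrix). *)

definition alg_closed :: "'k::field itself \<Rightarrow> bool" where
  "alg_closed _ \<longleftrightarrow> (\<forall>p :: 'k poly. degree p > 0 \<longrightarrow> (\<exists>x. poly p x = 0))"

definition quiver :: "nat \<Rightarrow> (nat \<times> nat) list \<Rightarrow> bool" where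
  "quiver n arr \<longleftrightarrow> (\<forall>(s,t)\<in>set arr. s < n \<and> t < n)"

definition quiver_connected :: "nat \<Rightarrow> (nat \<times> nat) list \<Rightarrow> bool" where
  "quiver_connected n arr \<longleftrightarrow> 0 < n \<and>
     (\<forall>u<n. \<forall>v<n. (u, v) \<in> (set arr \<union> (set arr)\<inverse>)\<^sup>*)"

definition quiver_acyclic :: "(nat \<times> nat) list \<Rightarrow> bool" where
  "quiver_acyclic arr \<longleftrightarrow> acyclic (set arr)"

definition fscale :: "'k::field \<Rightarrow> (nat \<Rightarrow> nat \<Rightarrow> nat \<Rightarrow> 'k) \<Rightarrow> (nat \<Rightarrow> nat \<Rightarrow> nat \<Rightarrow> 'k)" where
  "fscale c f = (\<lambda>v i j. c * f v i j)"

definition kdim :: "(nat \<Rightarrow> nat \<Rightarrow> nat \<Rightarrow> 'k::field) set \<Rightarrow> nat" where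
  "kdim S = vector_space.dim fscale S"

definition dimvec :: "nat \<Rightarrow> (nat \<Rightarrow> nat) \<Rightarrow> bool" where
  "dimvec n d \<longleftrightarrow> (\<forall>v\<ge>n. d v = 0)"

definition is_rep :: "(nat \<times> nat) list \<Rightarrow> (nat \<Rightarrow> nat) \<Rightarrow> (nat \<Rightarrow> nat \<Rightarrow> nat \<Rightarrow> 'k::field) \<Rightarrow> bool" where
  "is_rep arr d M \<longleftrightarrow>
     (\<forall>a i j. \<not> (a < length arr \<and> i < d (snd (arr!a)) \<and> j < d (fst (arr!a))) \<longrightarrow> M a i j = 0)"

definition vmaps :: "nat \<Rightarrow> (nat \<Rightarrow> nat) \<Rightarrow> (nat \<Rightarrow> nat) \<Rightarrow> (nat \<Rightarrow> nat \<Rightarrow> nat \<Rightarrow> 'k::field) set" where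
  "vmaps n a b = {\<phi>. \<forall>v i j. \<not> (v < n \<and> i < b v \<and> j < a v) \<longrightarrow> \<phi> v i j = 0}"

(* Ringel's map  delta(phi)_alpha = phi_{t alpha} M_alpha - N_alpha phi_{s alpha},
   from  (+)_v Hom(k^{a v}, k^{b v})  to  (+)_alpha Hom(k^{a (s alpha)}, k^{b (t alpha)}) *)
definition delta :: "(nat \<times> nat) list \<Rightarrow> (nat \<Rightarrow> nat) \<Rightarrow> (nat \<Rightarrow> nat) \<Rightarrow>
    (nat \<Rightarrow> nat \<Rightarrow> nat \<Rightarrow> 'k::field) \<Rightarrow> (nat \<Rightarrow> nat \<Rightarrow> nat \<Rightarrow> 'k) \<Rightarrow>
    (nat \<Rightarrow> nat \<Rightarrow> nat \<Rightarrow> 'k) \<Rightarrow> (nat \<Rightarrow> nat \<Rightarrow> nat \<Rightarrow> 'k)" where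
  "delta arr a b M N \<phi> = (\<lambda>al i j.
     if al < length arr \<and> i < b (snd (arr!al)) \<and> j < a (fst (arr!al)) then
       (\<Sum>l<a (snd (arr!al)). \<phi> (snd (arr!al)) i l * M al l j)
       - (\<Sum>l<b (fst (arr!al)). N al i l * \<phi> (fst (arr!al)) l j)
     else 0)"

(* Hom_{kQ}(M,N) = kernel of delta *)
definition homs :: "nat \<Rightarrow> (nat \<times> nat) list \<Rightarrow> (nat \<Rightarrow> nat) \<Rightarrow> (nat \<Rightarrow> nat) \<Rightarrow>
    (nat \<Rightarrow> nat \<Rightarrow> nat \<Rightarrow> 'k::field) \<Rightarrow> (nat \<Rightarrow> nat \<Rightarrow> nat \<Rightarrow> 'k) \<Rightarrow>
    (nat \<Rightarrow> nat \<Rightarrow> nat \<Rightarrow> 'k) set" where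
  "homs n arr a b M N = {\<phi> \<in> vmaps n a b. delta arr a b M N \<phi> = 0}"

(* dim Ext^1_{kQ}(M,N) = dim coker delta *)
definition ext_dim :: "nat \<Rightarrow> (nat \<times> nat) list \<Rightarrow> (nat \<Rightarrow> nat) \<Rightarrow> (nat \<Rightarrow> nat) \<Rightarrow>
    (nat \<Rightarrow> nat \<Rightarrow> nat \<Rightarrow> 'k::field) \<Rightarrow> (nat \<Rightarrow> nat \<Rightarrow> nat \<Rightarrow> 'k) \<Rightarrow> nat" where
  "ext_dim n arr a b M N =
     (\<Sum>al<length arr. a (fst (arr!al)) * b (snd (arr!al)))
     - kdim (delta arr a b M N ` vmaps n a b)"

(* generic (= minimal) value of dim Ext^1 *)
definition ext_gen :: "'k::field itself \<Rightarrow> nat \<Rightarrow> (nat \<times> nat) list \<Rightarrow> (nat \<Rightarrow> nat) \<Rightarrow> (nat \<Rightarrow> nat) \<Rightarrow> nat" where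
  "ext_gen _ n arr a b = (LEAST e. \<exists>(M :: nat \<Rightarrow> nat \<Rightarrow> nat \<Rightarrow> 'k) N.
      is_rep arr a M \<and> is_rep arr b N \<and> e = ext_dim n arr a b M N)"

definition ext_orth :: "'k::field itself \<Rightarrow> nat \<Rightarrow> (nat \<times> nat) list \<Rightarrow> (nat \<Rightarrow> nat) \<Rightarrow> (nat \<Rightarrow> nat) \<Rightarrow> bool" where
  "ext_orth K n arr a b \<longleftrightarrow> ext_gen K n arr a b = 0 \<and> ext_gen K n arr b a = 0"

definition schur_root :: "'k::field itself \<Rightarrow> nat \<Rightarrow> (nat \<times> nat) list \<Rightarrow> (nat \<Rightarrow> nat) \<Rightarrow> bool" where
  "schur_root _ n arr d \<longleftrightarrow> dimvec n d \<and> (\<exists>v<n. d v \<noteq> 0) \<and>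
     (\<exists>M :: nat \<Rightarrow> nat \<Rightarrow> nat \<Rightarrow> 'k. is_rep arr d M \<and>
        homs n arr d d M M = {(\<lambda>v i j. if v < n \<and> i < d v \<and> i = j then c else 0) | c. True})"

(* generic decomposition d = ds 0 (+) ... (+) ds (s-1)  (Kac): Schur roots summing to d
   with ext(ds i, ds j) = 0 for all i <> j *)
definition generic_decomp :: "'k::field itself \<Rightarrow> nat \<Rightarrow> (nat \<times> nat) list \<Rightarrow> (nat \<Rightarrow> nat) \<Rightarrow>
    nat \<Rightarrow> (nat \<Rightarrow> nat \<Rightarrow> nat) \<Rightarrow> bool" where
  "generic_decomp K n arr d s ds \<longleftrightarrow>
     (\<forall>j<s. schur_root K n arr (ds j)) \<and>
     (\<forall>v. (\<Sum>j<s. ds j v) = d v) \<and>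
     (\<forall>i<s. \<forall>j<s. i \<noteq> j \<longrightarrow> ext_gen K n arr (ds i) (ds j) = 0)"

end

theory Submission
  imports Defs "Jordan_Normal_Form.Determinant"
begin

text \<open>
  Ext-vanishing is read off Ringel's map \<open>\<delta>\<close>: \<open>ext(a, b) = 0\<close> iff \<open>\<delta>\<close> is onto for some
  representations of dimensions \<open>a\<close> and \<open>b\<close>, and ontoness is the nonvanishing of a minor, an open
  condition. As \<open>k\<close> is infinite, finitely many nonempty open conditions on the affine space of
  representations hold simultaneously, so generic ext-vanishing is additive in each argument.

  The key step is Schofield's: if \<open>ext(d\<^sub>1, d\<^sub>2) = 0\<close>, the general representation of dimension
  \<open>d\<^sub>1 + d\<^sub>2\<close> is conjugate to a block-triangular one, i.e. it has a subrepresentation of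
  dimension \<open>d\<^sub>1\<close> with quotient of dimension \<open>d\<^sub>2\<close>. Since \<open>Ext\<^sup>1\<close> is right exact,
  \<open>ext(d\<^sub>1 + d\<^sub>2, b) = 0\<close> then gives \<open>ext(d\<^sub>1, b) = 0\<close>, and \<open>ext(b, d\<^sub>1 + d\<^sub>2) = 0\<close>
  gives \<open>ext(b, d\<^sub>2) = 0\<close>.

  For the theorem write \<open>\<alpha>\<^sub>1 + \<alpha>\<^sub>1' = d\<^sub>j \<oplus> c\<close>, \<open>c\<close> the sum of the other summands of the
  generic decomposition, so that \<open>ext(d\<^sub>j, c) = ext(c, d\<^sub>j) = 0\<close>. If \<open>d\<^sub>j\<close> were \<open>\<alpha>\<^sub>1\<close> or
  \<open>\<alpha>\<^sub>1'\<close>, then \<open>c\<close> would be the other one and \<open>ext(\<alpha>\<^sub>1, \<alpha>\<^sub>1') = 0\<close>. Finally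
  \<open>ext(\<alpha>\<^sub>1 + \<alpha>\<^sub>1', \<alpha>\<^sub>i) = 0 = ext(\<alpha>\<^sub>i, \<alpha>\<^sub>1 + \<alpha>\<^sub>1')\<close> passes to the subrepresentation
  \<open>d\<^sub>j\<close> and to the quotient \<open>d\<^sub>j\<close>.
\<close>

section \<open>Polynomial functions on families of matrices\<close>

type_synonym 'k fam = "nat \<Rightarrow> nat \<Rightarrow> nat \<Rightarrow> 'k"

inductive polyfun :: "('k::field_char_0 fam \<Rightarrow> 'k) \<Rightarrow> bool" where
  polyfun_const: "polyfun (\<lambda>F. c)"
| polyfun_entry: "polyfun (\<lambda>F. F a i j)"
| polyfun_add: "polyfun f \<Longrightarrow> polyfun g \<Longrightarrow> polyfun (\<lambda>F. f F + g F)"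
| polyfun_mult: "polyfun f \<Longrightarrow> polyfun g \<Longrightarrow> polyfun (\<lambda>F. f F * g F)"

lemma polyfun_cmult: "polyfun f \<Longrightarrow> polyfun (\<lambda>F. c * f F)"
  using polyfun_mult[OF polyfun_const] .

lemma polyfun_multc: "polyfun f \<Longrightarrow> polyfun (\<lambda>F. f F * c)"
  using polyfun_mult[OF _ polyfun_const] .

lemma polyfun_diff: "polyfun f \<Longrightarrow> polyfun g \<Longrightarrow> polyfun (\<lambda>F. f F - g F)"
  using polyfun_add[OF _ polyfun_cmult[of g "-1"]] by simp

lemma polyfun_sum: "(\<And>x. x \<in> A \<Longrightarrow> polyfun (f x)) \<Longrightarrow> polyfun (\<lambda>F. \<Sum>x\<in>A. f x F)"
  by (induction A rule: infinite_finite_induct) (auto intro: polyfun.intros)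

lemma polyfun_prod: "(\<And>x. x \<in> A \<Longrightarrow> polyfun (f x)) \<Longrightarrow> polyfun (\<lambda>F. \<Prod>x\<in>A. f x F)"
  by (induction A rule: infinite_finite_induct) (auto intro: polyfun.intros)

lemma polyfun_if: "polyfun f \<Longrightarrow> polyfun g \<Longrightarrow> polyfun (\<lambda>F. if P then f F else g F)"
  by (cases P) simp_all

lemma polyfun_compose:
  "polyfun f \<Longrightarrow> (\<And>a i j. polyfun (\<lambda>F. L F a i j)) \<Longrightarrow> polyfun (\<lambda>F. f (L F))"
  by (induction f rule: polyfun.induct) (auto intro: polyfun.intros)

definition poly_curve :: "(nat \<Rightarrow> nat \<Rightarrow> nat \<Rightarrow> 'k::field_char_0 poly) \<Rightarrow> 'k \<Rightarrow> 'k fam" where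
  "poly_curve p t = (\<lambda>a i j. poly (p a i j) t)"

definition curve_coeff :: "(nat \<Rightarrow> nat \<Rightarrow> nat \<Rightarrow> 'k::field_char_0 poly) \<Rightarrow> nat \<Rightarrow> 'k fam" where
  "curve_coeff p k = (\<lambda>a i j. coeff (p a i j) k)"

definition line :: "'k::field_char_0 fam \<Rightarrow> 'k fam \<Rightarrow> 'k \<Rightarrow> 'k fam" where
  "line E V t = (\<lambda>a i j. E a i j + t * V a i j)"

lemma line_0 [simp]: "line E V 0 = E"
  by (simp add: line_def)

lemma line_1_diff: "line E (E' - E) 1 = E'"
  by (simp add: line_def)

lemma line_line: "line (line E V t) V s = line E V (t + s)"
  by (simp add: line_def algebra_simps)

lemma line_eq_poly_curve: "line E V t = poly_curve (\<lambda>a i j. [:E a i j, V a i j:]) t"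
  by (simp add: line_def poly_curve_def)

definition dderiv :: "('k::field_char_0 fam \<Rightarrow> 'k) \<Rightarrow> 'k fam \<Rightarrow> 'k fam \<Rightarrow> 'k" where
  "dderiv f E V = coeff (THE Q. \<forall>t. f (line E V t) = poly Q t) 1"

lemma dderiv_eq_coeff:
  assumes "\<forall>t. f (line E V t) = poly Q t"
  shows "dderiv f E V = coeff Q 1"
proof -
  have "(THE Q. \<forall>t. f (line E V t) = poly Q t) = Q"
  proof (rule the_equality)
    fix Q' assume "\<forall>t. f (line E V t) = poly Q' t"
    then have "poly Q' = poly Q" using assms by auto
    then show "Q' = Q" by (simp add: poly_eq_poly_eq_iff)
  qed (fact assms)
  then show ?thesis by (simp add: dderiv_def)
qed

lemma polyfun_along_line: "polyfun f \<Longrightarrow> \<exists>Q. \<forall>t. f (line E V t) = poly Q t"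
proof (induction rule: polyfun.induct)
  case (polyfun_const c)
  show ?case by (intro exI[of _ "[:c:]"]) simp
next
  case (polyfun_entry a i j)
  show ?case by (intro exI[of _ "[:E a i j, V a i j:]"]) (simp add: line_def)
next
  case (polyfun_add f g)
  then obtain Q1 Q2 where "\<forall>t. f (line E V t) = poly Q1 t" "\<forall>t. g (line E V t) = poly Q2 t" by blast
  then show ?case by (intro exI[of _ "Q1 + Q2"]) simp
next
  case (polyfun_mult f g)
  then obtain Q1 Q2 where "\<forall>t. f (line E V t) = poly Q1 t" "\<forall>t. g (line E V t) = poly Q2 t" by blast
  then show ?case by (intro exI[of _ "Q1 * Q2"]) simp
qed

lemma dderiv_const [simp]: "dderiv (\<lambda>F. c) E V = 0"
  by (rule dderiv_eq_coeff[of _ _ _ "[:c:]", simplified]) simp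

lemma dderiv_entry [simp]: "dderiv (\<lambda>F. F a i j) E V = V a i j"
  by (rule dderiv_eq_coeff[of _ _ _ "[:E a i j, V a i j:]", simplified]) (simp add: line_def)

lemma dderiv_add:
  assumes "polyfun f" "polyfun g"
  shows "dderiv (\<lambda>F. f F + g F) E V = dderiv f E V + dderiv g E V"
proof -
  obtain Q1 Q2 where Q: "\<forall>t. f (line E V t) = poly Q1 t" "\<forall>t. g (line E V t) = poly Q2 t"
    using assms polyfun_along_line by metis
  then have "dderiv (\<lambda>F. f F + g F) E V = coeff (Q1 + Q2) 1"
    by (intro dderiv_eq_coeff) simp
  then show ?thesis using dderiv_eq_coeff[OF Q(1)] dderiv_eq_coeff[OF Q(2)] by simp
qed

lemma dderiv_mult:
  assumes "polyfun f" "polyfun g"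
  shows "dderiv (\<lambda>F. f F * g F) E V = f E * dderiv g E V + dderiv f E V * g E"
proof -
  obtain Q1 Q2 where Q: "\<forall>t. f (line E V t) = poly Q1 t" "\<forall>t. g (line E V t) = poly Q2 t"
    using assms polyfun_along_line by metis
  then have "f E = coeff Q1 0" "g E = coeff Q2 0"
    by (metis line_0 poly_0_coeff_0)+
  moreover have "dderiv (\<lambda>F. f F * g F) E V = coeff (Q1 * Q2) 1"
    using Q by (intro dderiv_eq_coeff) simp
  ultimately show ?thesis using dderiv_eq_coeff[OF Q(1)] dderiv_eq_coeff[OF Q(2)]
    by (simp add: coeff_mult)
qed

lemma polyfun_dderiv: "polyfun f \<Longrightarrow> polyfun (\<lambda>E. dderiv f E V)"
  by (induction rule: polyfun.induct)
    (auto simp: dderiv_add dderiv_mult intro: polyfun.intros)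

lemma dderiv_add_direction: "polyfun f \<Longrightarrow> dderiv f E (V + W) = dderiv f E V + dderiv f E W"
  by (induction rule: polyfun.induct) (auto simp: dderiv_add dderiv_mult algebra_simps)

lemma polyfun_along_curve:
  assumes "polyfun f"
  shows "\<exists>Q. (\<forall>t. f (poly_curve p t) = poly Q t) \<and> coeff Q 0 = f (curve_coeff p 0)
            \<and> coeff Q 1 = dderiv f (curve_coeff p 0) (curve_coeff p 1)"
  using assms
proof (induction rule: polyfun.induct)
  case (polyfun_const c)
  show ?case by (intro exI[of _ "[:c:]"]) simp
next
  case (polyfun_entry a i j)
  show ?case by (intro exI[of _ "p a i j"]) (simp add: poly_curve_def curve_coeff_def)
next
  case (polyfun_add f g)
  then obtain Q1 Q2 where "\<forall>t. f (poly_curve p t) = poly Q1 t" "coeff Q1 0 = f (curve_coeff p 0)"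
      "coeff Q1 1 = dderiv f (curve_coeff p 0) (curve_coeff p 1)"
    "\<forall>t. g (poly_curve p t) = poly Q2 t" "coeff Q2 0 = g (curve_coeff p 0)"
      "coeff Q2 1 = dderiv g (curve_coeff p 0) (curve_coeff p 1)"
    by blast
  with polyfun_add.hyps show ?case by (intro exI[of _ "Q1 + Q2"]) (simp add: dderiv_add)
next
  case (polyfun_mult f g)
  then obtain Q1 Q2 where "\<forall>t. f (poly_curve p t) = poly Q1 t" "coeff Q1 0 = f (curve_coeff p 0)"
      "coeff Q1 1 = dderiv f (curve_coeff p 0) (curve_coeff p 1)"
    "\<forall>t. g (poly_curve p t) = poly Q2 t" "coeff Q2 0 = g (curve_coeff p 0)"
      "coeff Q2 1 = dderiv g (curve_coeff p 0) (curve_coeff p 1)"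
    by blast
  with polyfun_mult.hyps show ?case
    by (intro exI[of _ "Q1 * Q2"]) (simp add: dderiv_mult coeff_mult)
qed

lemma dderiv_eq_0_if_vanishes_on_curve:
  assumes "polyfun f" "\<And>t. f (poly_curve p t) = 0"
  shows "dderiv f (curve_coeff p 0) (curve_coeff p 1) = 0"
proof -
  obtain Q where "\<forall>t. f (poly_curve p t) = poly Q t"
      "coeff Q 1 = dderiv f (curve_coeff p 0) (curve_coeff p 1)"
    using polyfun_along_curve[OF assms(1)] by blast
  moreover from this have "poly Q = poly 0" using assms(2) by auto
  ultimately show ?thesis by (simp add: poly_eq_poly_eq_iff)
qed

lemma dderiv_eq_0_if_vanishes_on_line:
  assumes "polyfun f" "\<And>t. f (line E V t) = 0"
  shows "dderiv f E V = 0"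
  using dderiv_eq_0_if_vanishes_on_curve[of f "\<lambda>a i j. [:E a i j, V a i j:]"] assms
  by (simp add: line_eq_poly_curve curve_coeff_def)

lemma coeff_1_pcompose_shift:
  "coeff (pcompose Q [:t, 1:]) 1 = poly (pderiv Q) (t::'k::field_char_0)"
proof -
  have "coeff (pcompose Q [:t, 1:]) 1 = poly (pderiv (pcompose Q [:t, 1:])) 0"
    by (simp add: poly_0_coeff_0 coeff_pderiv)
  then show ?thesis by (simp add: pderiv_pcompose poly_pcompose pderiv_pCons)
qed

primrec dderiv_iter :: "'k::field_char_0 fam \<Rightarrow> ('k fam \<Rightarrow> 'k) \<Rightarrow> nat \<Rightarrow> 'k fam \<Rightarrow> 'k" where
  "dderiv_iter V f 0 = f"
| "dderiv_iter V f (Suc k) = (\<lambda>E. dderiv (dderiv_iter V f k) E V)"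

lemma dderiv_iter_along_line:
  assumes "\<forall>t. f (line E V t) = poly Q t"
  shows "dderiv_iter V f k (line E V t) = poly ((pderiv ^^ k) Q) t"
proof (induction k arbitrary: t)
  case 0
  then show ?case using assms by simp
next
  case (Suc k)
  have "\<forall>s. dderiv_iter V f k (line (line E V t) V s)
      = poly (pcompose ((pderiv ^^ k) Q) [:t, 1:]) s"
    by (simp add: Suc line_line poly_pcompose add.commute)
  then have "dderiv (dderiv_iter V f k) (line E V t) V
      = coeff (pcompose ((pderiv ^^ k) Q) [:t, 1:]) 1"
    by (rule dderiv_eq_coeff)
  then show ?case unfolding coeff_1_pcompose_shift by simp
qed

lemma polyfun_zero_if_dderiv_iter_zero:
  assumes "polyfun f" "\<And>k. dderiv_iter V f k E = 0"
  shows "f (line E V t) = 0"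
proof -
  obtain Q where Q: "\<forall>t. f (line E V t) = poly Q t"
    using polyfun_along_line[OF assms(1)] by blast
  have "fact k * coeff Q k = 0" for k
    using dderiv_iter_along_line[OF Q, of k 0] assms(2)
    by (simp add: poly_0_coeff_0 coeff_higher_pderiv pochhammer_fact)
  then have "Q = 0" by (simp add: poly_eq_iff)
  then show ?thesis using Q by simp
qed

definition line_closed :: "'k::field_char_0 fam set \<Rightarrow> bool" where
  "line_closed B \<longleftrightarrow> (\<forall>E\<in>B. \<forall>E'\<in>B. \<forall>t. line E (E' - E) t \<in> B)"

lemma polyfun_zero_if_zero_where_nonzero:
  assumes "line_closed B" "polyfun g" "polyfun f" "F0 \<in> B" "g F0 \<noteq> 0"
    and "\<And>F. F \<in> B \<Longrightarrow> g F \<noteq> 0 \<Longrightarrow> f F = 0" and "F \<in> B"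
  shows "f F = 0"
proof -
  obtain Qg Q where Qg: "\<forall>t. g (line F0 (F - F0) t) = poly Qg t"
    and Q: "\<forall>t. f (line F0 (F - F0) t) = poly Q t"
    using polyfun_along_line assms(2,3) by metis
  have "Qg \<noteq> 0" using Qg assms(5) by (metis line_0 poly_0)
  have "poly (Q * Qg) t = 0" for t
  proof -
    have "line F0 (F - F0) t \<in> B" using assms(1,4,7) unfolding line_closed_def by blast
    then have "g (line F0 (F - F0) t) \<noteq> 0 \<Longrightarrow> f (line F0 (F - F0) t) = 0" by (rule assms(6))
    then show ?thesis using Q Qg by auto
  qed
  then have "Q * Qg = 0" by (simp add: poly_eq_iff[symmetric] poly_eq_poly_eq_iff[symmetric]
      fun_eq_iff)
  then have "Q = 0" using \<open>Qg \<noteq> 0\<close> by simp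
  then show ?thesis using Q line_1_diff[of F0 F] by (metis poly_0)
qed

lemma polyfun_common_nonzero:
  assumes "line_closed B" "polyfun f" "polyfun g"
    and "X \<in> B" "f X \<noteq> 0" "Y \<in> B" "g Y \<noteq> 0"
  shows "\<exists>E\<in>B. f E \<noteq> 0 \<and> g E \<noteq> 0"
  using polyfun_zero_if_zero_where_nonzero[OF assms(1-5) _ assms(6)] assms(7) by blast

section \<open>Ext through Ringel's map\<close>

lemma sum_fam_apply: "(\<Sum>x\<in>A. (f x :: 'k::field fam)) a i j = (\<Sum>x\<in>A. f x a i j)"
  by (induction A rule: infinite_finite_induct) auto

interpretation fvs: vector_space "fscale :: 'k::field \<Rightarrow> 'k fam \<Rightarrow> 'k fam"
  by unfold_locales (auto simp: fscale_def algebra_simps fun_eq_iff)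

lemma (in vector_space) subset_subspace_if_card_le_dim:
  assumes "subspace S" "S \<subseteq> span U" "finite U" "card U \<le> dim S"
  shows "U \<subseteq> S"
proof
  fix x assume "x \<in> U"
  show "x \<in> S"
  proof (rule ccontr)
    assume "x \<notin> S"
    obtain B where B: "B \<subseteq> S" "independent B" "S \<subseteq> span B" "card B = dim S"
      using basis_exists by blast
    have "x \<notin> span B" using span_minimal[OF B(1) assms(1)] \<open>x \<notin> S\<close> by blast
    then have "independent (insert x B)" using B(2) by (rule independent_insertI)
    moreover have "insert x B \<subseteq> span U" using B(1) assms(2) \<open>x \<in> U\<close> span_base by blast
    ultimately have "finite (insert x B) \<and> card (insert x B) \<le> card U"
      by (rule independent_span_bound[OF assms(3)])
    moreover have "x \<notin> B" using B(1) \<open>x \<notin> S\<close> by blast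
    ultimately have "Suc (dim S) \<le> card U" using B(4) by auto
    then show False using assms(4) by simp
  qed
qed

definition arrow_fam :: "(nat \<times> nat) list \<Rightarrow> (nat \<Rightarrow> nat) \<Rightarrow> (nat \<Rightarrow> nat) \<Rightarrow> 'k::field fam \<Rightarrow> bool" where
  "arrow_fam arr a b \<psi> \<longleftrightarrow>
     (\<forall>al i j. \<not> (al < length arr \<and> i < b (snd (arr!al)) \<and> j < a (fst (arr!al))) \<longrightarrow> \<psi> al i j = 0)"

lemma is_rep_iff_arrow_fam: "is_rep arr d M \<longleftrightarrow> arrow_fam arr d d M"
  by (simp add: is_rep_def arrow_fam_def)

definition delta_surj :: "nat \<Rightarrow> (nat \<times> nat) list \<Rightarrow> (nat \<Rightarrow> nat) \<Rightarrow> (nat \<Rightarrow> nat) \<Rightarrow>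
    'k::field fam \<Rightarrow> 'k fam \<Rightarrow> bool" where
  "delta_surj n arr a b M N \<longleftrightarrow>
     (\<forall>\<psi>. arrow_fam arr a b \<psi> \<longrightarrow> (\<exists>\<phi>\<in>vmaps n a b. delta arr a b M N \<phi> = \<psi>))"

definition arrow_entries ::
  "(nat \<times> nat) list \<Rightarrow> (nat \<Rightarrow> nat) \<Rightarrow> (nat \<Rightarrow> nat) \<Rightarrow> (nat \<times> nat \<times> nat) set" where
  "arrow_entries arr a b = {(al, i, j). al < length arr \<and> i < b (snd (arr!al))
      \<and> j < a (fst (arr!al))}"

definition entry :: "'k fam \<Rightarrow> nat \<times> nat \<times> nat \<Rightarrow> 'k" where
  "entry \<psi> x = (case x of (al, i, j) \<Rightarrow> \<psi> al i j)"

definition unit_fam :: "nat \<times> nat \<times> nat \<Rightarrow> 'k::field fam" where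
  "unit_fam x = (\<lambda>al i j. if (al, i, j) = x then 1 else 0)"

lemma arrow_entries_Sigma:
  "arrow_entries arr a b = (SIGMA al:{..<length arr}. {..<b (snd (arr!al))} \<times>
      {..<a (fst (arr!al))})"
  by (auto simp: arrow_entries_def)

lemma finite_arrow_entries: "finite (arrow_entries arr a b)"
  by (simp add: arrow_entries_Sigma)

lemma card_arrow_entries:
  "card (arrow_entries arr a b) = (\<Sum>al<length arr. a (fst (arr!al)) * b (snd (arr!al)))"
  by (simp add: arrow_entries_Sigma card_SigmaI card_cartesian_product mult.commute)

lemma inj_unit_fam: "inj (unit_fam :: _ \<Rightarrow> 'k::field fam)"
proof (rule injI)
  fix x y :: "nat \<times> nat \<times> nat"
  assume "(unit_fam x :: 'k fam) = unit_fam y"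
  then have "entry (unit_fam x :: 'k fam) x = entry (unit_fam y) x" by simp
  then show "x = y" by (cases x) (auto simp: entry_def unit_fam_def split: if_splits)
qed

lemma arrow_fam_unit_fam: "x \<in> arrow_entries arr a b \<Longrightarrow> arrow_fam arr a b (unit_fam x)"
  by (auto simp: arrow_fam_def arrow_entries_def unit_fam_def)

lemma sum_scaled_unit_fams:
  "finite A \<Longrightarrow> (\<Sum>x\<in>A. fscale (u x) (unit_fam x) :: 'k::field fam) al i j
     = (if (al, i, j) \<in> A then u (al, i, j) else 0)"
proof -
  assume "finite A"
  have "(\<Sum>x\<in>A. fscale (u x) (unit_fam x) :: 'k fam) al i j
      = (\<Sum>x\<in>A. if x = (al, i, j) then u x else 0)"
    by (auto simp: sum_fam_apply fscale_def unit_fam_def intro!: sum.cong)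
  with \<open>finite A\<close> show ?thesis by (simp add: sum.delta)
qed

lemma independent_unit_fams:
  "fvs.independent (unit_fam ` arrow_entries arr a b :: 'k::field fam set)"
proof
  let ?P = "arrow_entries arr a b"
  assume "fvs.dependent (unit_fam ` ?P :: 'k fam set)"
  then obtain u where u: "\<exists>v\<in>unit_fam ` ?P. u v \<noteq> 0"
      "(\<Sum>v\<in>unit_fam ` ?P. fscale (u v) v) = (0 :: 'k fam)"
    using fvs.dependent_finite[of "unit_fam ` ?P"] finite_arrow_entries by blast
  then obtain x where x: "x \<in> ?P" "u (unit_fam x) \<noteq> 0" by blast
  have "(\<Sum>y\<in>?P. fscale ((u \<circ> unit_fam) y) (unit_fam y) :: 'k fam) = 0"
    using u(2) by (subst (asm) sum.reindex) (auto intro: inj_on_subset[OF inj_unit_fam])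
  then have "(\<Sum>y\<in>?P. fscale ((u \<circ> unit_fam) y) (unit_fam y) :: 'k fam) (fst x) (fst (snd x))
      (snd (snd x)) = 0"
    by simp
  then show False using x by (simp add: sum_scaled_unit_fams finite_arrow_entries)
qed

lemma arrow_fam_in_span_unit_fams:
  assumes "arrow_fam arr a b \<psi>"
  shows "\<psi> \<in> fvs.span (unit_fam ` arrow_entries arr a b :: 'k::field fam set)"
proof -
  have "\<psi> = (\<Sum>x\<in>arrow_entries arr a b. fscale (entry \<psi> x) (unit_fam x))"
  proof (intro ext)
    fix al i j
    show "\<psi> al i j = (\<Sum>x\<in>arrow_entries arr a b. fscale (entry \<psi> x) (unit_fam x)) al i j"
      unfolding sum_scaled_unit_fams[OF finite_arrow_entries]
      using assms by (auto simp: entry_def arrow_fam_def arrow_entries_def)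
  qed
  also have "\<dots> \<in> fvs.span (unit_fam ` arrow_entries arr a b)"
    by (intro fvs.span_sum fvs.span_scale fvs.span_base) auto
  finally show ?thesis .
qed

lemma arrow_fam_delta: "arrow_fam arr a b (delta arr a b M N \<phi>)"
  by (simp add: arrow_fam_def delta_def)

lemma delta_add: "delta arr a b M N (\<lambda>v i j. \<phi> v i j + \<phi>' v i j)
    = (\<lambda>al i j. delta arr a b M N \<phi> al i j + delta arr a b M N \<phi>' al i j)"
  by (auto simp: delta_def fun_eq_iff sum.distrib algebra_simps)

lemma delta_scale:
  "delta arr a b M N (\<lambda>v i j. c * \<phi> v i j) = (\<lambda>al i j. c * delta arr a b M N \<phi> al i j)"
  by (auto simp: delta_def fun_eq_iff sum_distrib_left algebra_simps)

lemma delta_zero: "delta arr a b M N (\<lambda>v i j. 0) = (\<lambda>al i j. 0)"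
  by (auto simp: delta_def fun_eq_iff)

lemma delta_sum: "delta arr a b M N (\<lambda>v i j. \<Sum>q\<in>Q. c q * \<phi>s q v i j)
    = (\<lambda>al i j. \<Sum>q\<in>Q. c q * delta arr a b M N (\<phi>s q) al i j)"
proof (induction Q rule: infinite_finite_induct)
  case (infinite A) then show ?case by (simp add: delta_zero)
next
  case empty then show ?case by (simp add: delta_zero)
next
  case (insert x F)
  have "delta arr a b M N (\<lambda>v i j. \<Sum>q\<in>insert x F. c q * \<phi>s q v i j)
      = delta arr a b M N (\<lambda>v i j. c x * \<phi>s x v i j + (\<Sum>q\<in>F. c q * \<phi>s q v i j))"
    using insert by simp
  also have "\<dots> = (\<lambda>al i j. c x * delta arr a b M N (\<phi>s x) al i j
      + (\<Sum>q\<in>F. c q * delta arr a b M N (\<phi>s q) al i j))"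
    by (simp only: delta_add delta_scale insert.IH)
  finally show ?case using insert by simp
qed

lemma subspace_delta_image: "fvs.subspace (delta arr a b M N ` vmaps n a b :: 'k::field fam set)"
  unfolding fvs.subspace_def
proof (intro conjI ballI allI)
  show "(0 :: 'k fam) \<in> delta arr a b M N ` vmaps n a b"
    by (rule image_eqI[of _ _ "\<lambda>v i j. 0"]) (auto simp: delta_zero vmaps_def fun_eq_iff)
next
  fix x y :: "'k fam" assume "x \<in> delta arr a b M N ` vmaps n a b"
    "y \<in> delta arr a b M N ` vmaps n a b"
  then obtain \<phi> \<phi>' where "\<phi> \<in> vmaps n a b" "\<phi>' \<in> vmaps n a b" "x = delta arr a b M N \<phi>"
      "y = delta arr a b M N \<phi>'"
    by blast
  then show "x + y \<in> delta arr a b M N ` vmaps n a b"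
    by (intro image_eqI[of _ _ "\<lambda>v i j. \<phi> v i j + \<phi>' v i j"]) (auto simp: delta_add vmaps_def
      fun_eq_iff)
next
  fix c :: 'k and x :: "'k fam" assume "x \<in> delta arr a b M N ` vmaps n a b"
  then obtain \<phi> where "\<phi> \<in> vmaps n a b" "x = delta arr a b M N \<phi>" by blast
  then show "fscale c x \<in> delta arr a b M N ` vmaps n a b"
    by (intro image_eqI[of _ _ "\<lambda>v i j. c * \<phi> v i j"]) (auto simp: delta_scale vmaps_def
      fscale_def fun_eq_iff)
qed

lemma delta_surj_iff_unit_fams_in_image:
  fixes M N :: "'k::field fam"
  shows "delta_surj n arr a b M N \<longleftrightarrow> unit_fam ` arrow_entries arr a b \<subseteq> delta arr a b M N ` vmaps n
      a b"
proof
  assume surj: "delta_surj n arr a b M N"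
  show "unit_fam ` arrow_entries arr a b \<subseteq> delta arr a b M N ` vmaps n a b"
  proof
    fix y :: "'k fam" assume "y \<in> unit_fam ` arrow_entries arr a b"
    then obtain x where "x \<in> arrow_entries arr a b" "y = unit_fam x" by blast
    then obtain \<phi> where "\<phi> \<in> vmaps n a b" "delta arr a b M N \<phi> = y"
      using surj arrow_fam_unit_fam unfolding delta_surj_def by blast
    then show "y \<in> delta arr a b M N ` vmaps n a b" by blast
  qed
next
  assume "unit_fam ` arrow_entries arr a b \<subseteq> delta arr a b M N ` vmaps n a b"
  then have "fvs.span (unit_fam ` arrow_entries arr a b) \<subseteq> delta arr a b M N ` vmaps n a b"
    using subspace_delta_image by (rule fvs.span_minimal)
  then show "delta_surj n arr a b M N"
    unfolding delta_surj_def using arrow_fam_in_span_unit_fams by blast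
qed

lemma ext_dim_eq_0_iff: "ext_dim n arr a b M N = 0 \<longleftrightarrow> delta_surj n arr a b (M :: 'k::field fam) N"
proof -
  let ?img = "delta arr a b M N ` vmaps n a b :: 'k fam set"
  let ?U = "unit_fam ` arrow_entries arr a b :: 'k fam set"
  have card_U: "card ?U = (\<Sum>al<length arr. a (fst (arr!al)) * b (snd (arr!al)))"
    by (simp add: card_image inj_on_subset[OF inj_unit_fam] card_arrow_entries)
  have img_U: "?img \<subseteq> fvs.span ?U"
    using arrow_fam_delta arrow_fam_in_span_unit_fams by blast
  have "card ?U \<le> fvs.dim ?img \<longleftrightarrow> ?U \<subseteq> ?img"
  proof
    assume "card ?U \<le> fvs.dim ?img"
    then show "?U \<subseteq> ?img"
      by (intro fvs.subset_subspace_if_card_le_dim[OF subspace_delta_image img_U])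
        (simp_all add: finite_arrow_entries)
  next
    assume "?U \<subseteq> ?img"
    then show "card ?U \<le> fvs.dim ?img"
      using fvs.dim_unique[OF _ img_U independent_unit_fams] by simp
  qed
  then show ?thesis
    using card_U by (auto simp: ext_dim_def kdim_def delta_surj_iff_unit_fams_in_image)
qed

lemma ext_gen_eq_0_iff: "ext_gen TYPE('k::field) n arr a b = 0 \<longleftrightarrow>
  (\<exists>M N :: 'k fam. is_rep arr a M \<and> is_rep arr b N \<and> delta_surj n arr a b M N)"
proof -
  let ?P = "\<lambda>e. \<exists>(M :: 'k fam) N. is_rep arr a M \<and> is_rep arr b N \<and> ext_dim n arr a b M N = e"
  have ex: "?P (ext_dim n arr a b (\<lambda>_ _ _. 0::'k) (\<lambda>_ _ _. 0))"
    by (auto simp: is_rep_def)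
  have eq: "ext_gen TYPE('k) n arr a b = (LEAST e. ?P e)"
    unfolding ext_gen_def by (metis (no_types, lifting))
  have "ext_gen TYPE('k) n arr a b = 0 \<longleftrightarrow> ?P 0"
  proof
    assume "ext_gen TYPE('k) n arr a b = 0"
    then show "?P 0" using LeastI[of ?P, OF ex] eq by simp
  next
    assume "?P 0"
    from Least_eq_0[of ?P, OF this] eq show "ext_gen TYPE('k) n arr a b = 0" by simp
  qed
  then show ?thesis by (simp add: ext_dim_eq_0_iff)
qed

lemma polyfun_det:
  assumes "\<And>p q. p < m \<Longrightarrow> q < m \<Longrightarrow> polyfun (\<lambda>F. e F p q)"
  shows "polyfun (\<lambda>F. det (mat m m (\<lambda>(p, q). e F p q)))"
proof -
  have "det (mat m m (\<lambda>(p, q). e F p q))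
      = (\<Sum>\<pi>\<in>{\<pi>. \<pi> permutes {0..<m}}. signof \<pi> * (\<Prod>i\<in>{0..<m}. e F i (\<pi> i)))" for F
    unfolding det_def'[OF mat_carrier]
    by (intro sum.cong refl arg_cong[where f = "\<lambda>x. _ * x"] prod.cong)
      (auto dest: permutes_in_image)
  moreover have "polyfun (\<lambda>F. \<Sum>\<pi>\<in>{\<pi>. \<pi> permutes {0..<m}}. signof \<pi> * (\<Prod>i\<in>{0..<m}. e F i (\<pi> i)))"
    using assms by (auto intro!: polyfun_sum polyfun_cmult polyfun_prod dest: permutes_in_image)
  ultimately show ?thesis by simp
qed

lemma delta_surj_if_det_nonzero:
  fixes M N :: "'k::field fam"
  assumes pos: "bij_betw pos {0..<m} (arrow_entries arr a b)"
    and \<phi>s: "\<And>q. q < m \<Longrightarrow> \<phi>s q \<in> vmaps n a b"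
    and det: "det (mat m m (\<lambda>(p, q). entry (delta arr a b M N (\<phi>s q)) (pos p))) \<noteq> 0"
  shows "delta_surj n arr a b M N"
  unfolding delta_surj_def
proof (intro allI impI)
  fix \<psi> :: "'k fam" assume \<psi>: "arrow_fam arr a b \<psi>"
  let ?C = "mat m m (\<lambda>(p, q). entry (delta arr a b M N (\<phi>s q)) (pos p))"
  obtain B where B: "B \<in> carrier_mat m m" "?C * B = 1\<^sub>m m"
    using det_non_zero_imp_unit[of ?C m] det unfolding Units_def by (auto simp: ring_mat_simps)
  define y where "y = vec m (\<lambda>p. entry \<psi> (pos p))"
  define x where "x = B *\<^sub>v y"
  have Cx: "?C *\<^sub>v x = y"
    using assoc_mult_mat_vec[of ?C m m B m y] B by (simp add: x_def y_def)
  define \<phi> where "\<phi> = (\<lambda>v i j. \<Sum>q\<in>{0..<m}. x $ q * \<phi>s q v i j)"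
  have "\<phi> \<in> vmaps n a b"
    using \<phi>s unfolding vmaps_def \<phi>_def by auto
  moreover have "delta arr a b M N \<phi> = \<psi>"
  proof (intro ext)
    fix al i j
    show "delta arr a b M N \<phi> al i j = \<psi> al i j"
    proof (cases "(al, i, j) \<in> arrow_entries arr a b")
      case True
      then have "(al, i, j) \<in> pos ` {0..<m}" using pos by (simp add: bij_betw_def)
      then obtain p where p: "p < m" "pos p = (al, i, j)" by auto
      have "delta arr a b M N \<phi> al i j = (\<Sum>q\<in>{0..<m}. x $ q * delta arr a b M N (\<phi>s q) al i j)"
        unfolding \<phi>_def delta_sum by simp
      also have "\<dots> = (?C *\<^sub>v x) $ p"
        using p B(1) by (simp add: x_def scalar_prod_def entry_def mult.commute)
      also have "\<dots> = \<psi> al i j"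
        unfolding Cx using p by (simp add: y_def entry_def)
      finally show ?thesis .
    next
      case False
      then show ?thesis using \<psi> arrow_fam_delta[of arr a b M N \<phi>]
        by (auto simp: arrow_fam_def arrow_entries_def)
    qed
  qed
  ultimately show "\<exists>\<phi>\<in>vmaps n a b. delta arr a b M N \<phi> = \<psi>" by blast
qed

lemma polyfun_delta_entry:
  assumes "\<And>al i j. polyfun (\<lambda>F. MF F al i j)" "\<And>al i j. polyfun (\<lambda>F. NF F al i j)"
  shows "polyfun (\<lambda>F. entry (delta arr a b (MF F) (NF F) \<phi>) x)"
proof -
  obtain al i j where x: "x = (al, i, j)" by (cases x)
  show ?thesis
  proof (cases "al < length arr \<and> i < b (snd (arr!al)) \<and> j < a (fst (arr!al))")
    case True
    then show ?thesis
      unfolding x entry_def delta_def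
      by (auto intro!: polyfun_diff polyfun_sum polyfun_cmult polyfun_multc assms)
  next
    case False
    then have "(\<lambda>F. entry (delta arr a b (MF F) (NF F) \<phi>) x) = (\<lambda>F. 0)"
      unfolding x entry_def delta_def by auto
    then show ?thesis by (simp add: polyfun_const)
  qed
qed

text \<open>The witness is the determinant of \<open>\<delta>\<close> on preimages, at \<open>F\<^sub>0\<close>, of the unit families;
  it is \<open>1\<close> at \<open>F\<^sub>0\<close>.\<close>

lemma delta_surj_open:
  fixes MF NF :: "'k::field_char_0 fam \<Rightarrow> 'k fam"
  assumes "\<And>al i j. polyfun (\<lambda>F. MF F al i j)" "\<And>al i j. polyfun (\<lambda>F. NF F al i j)"
    and "delta_surj n arr a b (MF F0) (NF F0)"
  shows "\<exists>g. polyfun g \<and> g F0 \<noteq> 0 \<and> (\<forall>F. g F \<noteq> 0 \<longrightarrow> delta_surj n arr a b (MF F) (NF F))"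
proof -
  define m where "m = card (arrow_entries arr a b)"
  obtain pos where pos: "bij_betw pos {0..<m} (arrow_entries arr a b)"
    using ex_bij_betw_nat_finite[OF finite_arrow_entries] unfolding m_def by blast
  have "\<exists>\<phi>\<in>vmaps n a b. delta arr a b (MF F0) (NF F0) \<phi> = unit_fam (pos q)" if "q < m" for q
    using assms(3) arrow_fam_unit_fam[OF bij_betwE[OF pos, rule_format]] that
    unfolding delta_surj_def by auto
  then obtain \<phi>s where \<phi>s: "\<And>q. q < m \<Longrightarrow> \<phi>s q \<in> vmaps n a b"
    "\<And>q. q < m \<Longrightarrow> delta arr a b (MF F0) (NF F0) (\<phi>s q) = unit_fam (pos q)"
    by metis
  define g where "g F = det (mat m m (\<lambda>(p, q). entry (delta arr a b (MF F) (NF F) (\<phi>s q))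
    (pos p)))" for F
  have "mat m m (\<lambda>(p, q). entry (delta arr a b (MF F0) (NF F0) (\<phi>s q)) (pos p)) = 1\<^sub>m m"
    using \<phi>s(2) bij_betw_imp_inj_on[OF pos]
    by (intro eq_matI) (auto simp: unit_fam_def entry_def inj_on_def split: prod.split)
  then have "g F0 \<noteq> 0" by (simp add: g_def)
  moreover have "polyfun g"
    unfolding g_def by (intro polyfun_det polyfun_delta_entry assms(1,2))
  moreover have "delta_surj n arr a b (MF F) (NF F)" if "g F \<noteq> 0" for F
    by (rule delta_surj_if_det_nonzero[OF pos]) (use \<phi>s(1) that in \<open>simp_all add: g_def\<close>)
  ultimately show ?thesis by blast
qed

section \<open>Direct sums and generic vanishing of Ext\<close>

lemma is_rep_zero:
  "is_rep arr d M \<Longrightarrow> \<not> (al < length arr \<and> i < d (snd (arr!al)) \<and> j < d (fst (arr!al)))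
      \<Longrightarrow> M al i j = 0"
  by (simp add: is_rep_def)

lemma vmaps_zero: "\<phi> \<in> vmaps n a b \<Longrightarrow> \<not> (v < n \<and> i < b v \<and> j < a v) \<Longrightarrow> \<phi> v i j = 0"
  by (simp add: vmaps_def)

lemma sum_lessThan_add_split: "(\<Sum>l<a + b. f l) = (\<Sum>l<a. f l) + (\<Sum>l<(b::nat). f (l + a))"
  by (induction b) (simp_all add: add.commute add.left_commute)

lemma delta_apply:
  "al < length arr \<Longrightarrow> i < b (snd (arr!al)) \<Longrightarrow> j < a (fst (arr!al)) \<Longrightarrow>
   delta arr a b M N \<phi> al i j = (\<Sum>l<a (snd (arr!al)). \<phi> (snd (arr!al)) i l * M al l j)
       - (\<Sum>l<b (fst (arr!al)). N al i l * \<phi> (fst (arr!al)) l j)"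
  by (simp add: delta_def)

definition dsum :: "(nat \<times> nat) list \<Rightarrow> (nat \<Rightarrow> nat) \<Rightarrow> 'k::field fam \<Rightarrow> 'k fam \<Rightarrow> 'k fam" where
  "dsum arr a M N = (\<lambda>al i j.
     if i < a (snd (arr!al)) then (if j < a (fst (arr!al)) then M al i j else 0)
     else (if j < a (fst (arr!al)) then 0 else N al (i - a (snd (arr!al))) (j - a (fst (arr!al)))))"

lemma is_rep_dsum: "is_rep arr a M \<Longrightarrow> is_rep arr b N \<Longrightarrow> is_rep arr (\<lambda>v. a v + b v) (dsum arr a M N)"
  unfolding is_rep_def dsum_def by (auto simp: not_less)

definition stack_rows ::
  "('x \<Rightarrow> nat) \<Rightarrow> ('x \<Rightarrow> nat \<Rightarrow> nat \<Rightarrow> 'k) \<Rightarrow> ('x \<Rightarrow> nat \<Rightarrow> nat \<Rightarrow> 'k) \<Rightarrow> 'x \<Rightarrow> nat \<Rightarrow> nat \<Rightarrow> 'k" where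
  "stack_rows k X Y = (\<lambda>x i j. if i < k x then X x i j else Y x (i - k x) j)"

definition stack_cols ::
  "('x \<Rightarrow> nat) \<Rightarrow> ('x \<Rightarrow> nat \<Rightarrow> nat \<Rightarrow> 'k) \<Rightarrow> ('x \<Rightarrow> nat \<Rightarrow> nat \<Rightarrow> 'k) \<Rightarrow> 'x \<Rightarrow> nat \<Rightarrow> nat \<Rightarrow> 'k" where
  "stack_cols k X Y = (\<lambda>x i j. if j < k x then X x i j else Y x i (j - k x))"

lemma stack_rows_upper [simp]: "i < k x \<Longrightarrow> stack_rows k X Y x i j = X x i j"
  and stack_rows_lower [simp]: "\<not> i < k x \<Longrightarrow> stack_rows k X Y x i j = Y x (i - k x) j"
  by (simp_all add: stack_rows_def)

lemma stack_cols_left [simp]: "j < k x \<Longrightarrow> stack_cols k X Y x i j = X x i j"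
  and stack_cols_right [simp]: "\<not> j < k x \<Longrightarrow> stack_cols k X Y x i j = Y x i (j - k x)"
  by (simp_all add: stack_cols_def)

lemma stack_rows_vmaps:
  "\<phi>1 \<in> vmaps n c a \<Longrightarrow> \<phi>2 \<in> vmaps n c b \<Longrightarrow> stack_rows a \<phi>1 \<phi>2 \<in> vmaps n c (\<lambda>v. a v + b v)"
  unfolding vmaps_def stack_rows_def by (auto simp: not_less)

lemma stack_cols_vmaps:
  "\<phi>1 \<in> vmaps n a c \<Longrightarrow> \<phi>2 \<in> vmaps n b c \<Longrightarrow> stack_cols a \<phi>1 \<phi>2 \<in> vmaps n (\<lambda>v. a v + b v) c"
  unfolding vmaps_def stack_cols_def by (auto simp: not_less)

lemma delta_dsum_target:
  "delta arr c (\<lambda>v. a v + b v) M (dsum arr a N1 N2) (stack_rows a \<phi>1 \<phi>2)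
     = stack_rows (\<lambda>al. a (snd (arr!al))) (delta arr c a M N1 \<phi>1) (delta arr c b M N2 \<phi>2)"
proof (intro ext)
  fix al i j
  let ?t = "snd (arr!al)" and ?s = "fst (arr!al)"
  let ?N = "dsum arr a N1 N2"
  show "delta arr c (\<lambda>v. a v + b v) M ?N (stack_rows a \<phi>1 \<phi>2) al i j
     = stack_rows (\<lambda>al. a (snd (arr!al))) (delta arr c a M N1 \<phi>1) (delta arr c b M N2 \<phi>2) al i j"
  proof (cases "al < length arr \<and> i < a ?t + b ?t \<and> j < c ?s")
    case False
    then show ?thesis by (auto simp: stack_rows_def delta_def)
  next
    case True
    have split: "(\<Sum>l<a ?s + b ?s. ?N al i l * stack_rows a \<phi>1 \<phi>2 ?s l j)
      = (\<Sum>l<a ?s. ?N al i l * stack_rows a \<phi>1 \<phi>2 ?s l j)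
        + (\<Sum>l<b ?s. ?N al i (l + a ?s) * stack_rows a \<phi>1 \<phi>2 ?s (l + a ?s) j)"
      by (rule sum_lessThan_add_split)
    show ?thesis
    proof (cases "i < a ?t")
      case upper: True
      have "(\<Sum>l<b ?s. ?N al i (l + a ?s) * stack_rows a \<phi>1 \<phi>2 ?s (l + a ?s) j) = 0"
        using upper by (intro sum.neutral) (auto simp: dsum_def)
      moreover have "(\<Sum>l<a ?s. ?N al i l * stack_rows a \<phi>1 \<phi>2 ?s l j)
          = (\<Sum>l<a ?s. N1 al i l * \<phi>1 ?s l j)"
        using upper by (intro sum.cong) (auto simp: dsum_def)
      ultimately show ?thesis
        using True upper by (simp add: delta_apply split)
    next
      case lower: False
      have "(\<Sum>l<a ?s. ?N al i l * stack_rows a \<phi>1 \<phi>2 ?s l j) = 0"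
        using lower by (intro sum.neutral) (auto simp: dsum_def)
      moreover have "(\<Sum>l<b ?s. ?N al i (l + a ?s) * stack_rows a \<phi>1 \<phi>2 ?s (l + a ?s) j)
          = (\<Sum>l<b ?s. N2 al (i - a ?t) l * \<phi>2 ?s l j)"
        using lower by (intro sum.cong) (auto simp: dsum_def)
      moreover have "i - a ?t < b ?t" using True lower by linarith
      ultimately show ?thesis
        using True lower by (simp add: delta_apply split)
    qed
  qed
qed

lemma delta_dsum_source:
  "delta arr (\<lambda>v. a v + b v) c (dsum arr a M1 M2) N (stack_cols a \<phi>1 \<phi>2)
     = stack_cols (\<lambda>al. a (fst (arr!al))) (delta arr a c M1 N \<phi>1) (delta arr b c M2 N \<phi>2)"
proof (intro ext)
  fix al i j
  let ?t = "snd (arr!al)" and ?s = "fst (arr!al)"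
  let ?M = "dsum arr a M1 M2"
  show "delta arr (\<lambda>v. a v + b v) c ?M N (stack_cols a \<phi>1 \<phi>2) al i j
     = stack_cols (\<lambda>al. a (fst (arr!al))) (delta arr a c M1 N \<phi>1) (delta arr b c M2 N \<phi>2) al i j"
  proof (cases "al < length arr \<and> i < c ?t \<and> j < a ?s + b ?s")
    case False
    then show ?thesis by (auto simp: stack_cols_def delta_def)
  next
    case True
    have split: "(\<Sum>l<a ?t + b ?t. stack_cols a \<phi>1 \<phi>2 ?t i l * ?M al l j)
      = (\<Sum>l<a ?t. stack_cols a \<phi>1 \<phi>2 ?t i l * ?M al l j)
        + (\<Sum>l<b ?t. stack_cols a \<phi>1 \<phi>2 ?t i (l + a ?t) * ?M al (l + a ?t) j)"
      by (rule sum_lessThan_add_split)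
    show ?thesis
    proof (cases "j < a ?s")
      case left: True
      have "(\<Sum>l<b ?t. stack_cols a \<phi>1 \<phi>2 ?t i (l + a ?t) * ?M al (l + a ?t) j) = 0"
        using left by (intro sum.neutral) (auto simp: dsum_def)
      moreover have "(\<Sum>l<a ?t. stack_cols a \<phi>1 \<phi>2 ?t i l * ?M al l j)
          = (\<Sum>l<a ?t. \<phi>1 ?t i l * M1 al l j)"
        using left by (intro sum.cong) (auto simp: dsum_def)
      ultimately show ?thesis
        using True left by (simp add: delta_apply split)
    next
      case right: False
      have "(\<Sum>l<a ?t. stack_cols a \<phi>1 \<phi>2 ?t i l * ?M al l j) = 0"
        using right by (intro sum.neutral) (auto simp: dsum_def)
      moreover have "(\<Sum>l<b ?t. stack_cols a \<phi>1 \<phi>2 ?t i (l + a ?t) * ?M al (l + a ?t) j)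
          = (\<Sum>l<b ?t. \<phi>2 ?t i l * M2 al l (j - a ?s))"
        using right by (intro sum.cong) (auto simp: dsum_def)
      moreover have "j - a ?s < b ?s" using True right by linarith
      ultimately show ?thesis
        using True right by (simp add: delta_apply split)
    qed
  qed
qed

lemma delta_surj_dsum_target:
  fixes M N1 N2 :: "'k::field fam"
  assumes "delta_surj n arr c a M N1" "delta_surj n arr c b M N2"
  shows "delta_surj n arr c (\<lambda>v. a v + b v) M (dsum arr a N1 N2)"
  unfolding delta_surj_def
proof (intro allI impI)
  fix \<psi> :: "'k fam" assume \<psi>: "arrow_fam arr c (\<lambda>v. a v + b v) \<psi>"
  define \<psi>1 where "\<psi>1 = (\<lambda>al i j. if i < a (snd (arr!al)) then \<psi> al i j else 0)"
  define \<psi>2 where "\<psi>2 = (\<lambda>al i j. \<psi> al (i + a (snd (arr!al))) j)"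
  have "arrow_fam arr c a \<psi>1" "arrow_fam arr c b \<psi>2"
    using \<psi> by (auto simp: arrow_fam_def \<psi>1_def \<psi>2_def)
  then obtain \<phi>1 \<phi>2 where \<phi>: "\<phi>1 \<in> vmaps n c a" "delta arr c a M N1 \<phi>1 = \<psi>1"
    "\<phi>2 \<in> vmaps n c b" "delta arr c b M N2 \<phi>2 = \<psi>2"
    using assms unfolding delta_surj_def by meson
  have "delta arr c (\<lambda>v. a v + b v) M (dsum arr a N1 N2) (stack_rows a \<phi>1 \<phi>2) = \<psi>"
    unfolding delta_dsum_target \<phi>(2,4) by (auto simp: stack_rows_def \<psi>1_def \<psi>2_def fun_eq_iff)
  then show "\<exists>\<phi>\<in>vmaps n c (\<lambda>v. a v + b v). delta arr c (\<lambda>v. a v + b v) M (dsum arr a N1 N2) \<phi> = \<psi>"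
    using stack_rows_vmaps[OF \<phi>(1,3)] by blast
qed

lemma delta_surj_dsum_source:
  fixes M1 M2 N :: "'k::field fam"
  assumes "delta_surj n arr a c M1 N" "delta_surj n arr b c M2 N"
  shows "delta_surj n arr (\<lambda>v. a v + b v) c (dsum arr a M1 M2) N"
  unfolding delta_surj_def
proof (intro allI impI)
  fix \<psi> :: "'k fam" assume \<psi>: "arrow_fam arr (\<lambda>v. a v + b v) c \<psi>"
  define \<psi>1 where "\<psi>1 = (\<lambda>al i j. if j < a (fst (arr!al)) then \<psi> al i j else 0)"
  define \<psi>2 where "\<psi>2 = (\<lambda>al i j. \<psi> al i (j + a (fst (arr!al))))"
  have "arrow_fam arr a c \<psi>1" "arrow_fam arr b c \<psi>2"
    using \<psi> by (auto simp: arrow_fam_def \<psi>1_def \<psi>2_def)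
  then obtain \<phi>1 \<phi>2 where \<phi>: "\<phi>1 \<in> vmaps n a c" "delta arr a c M1 N \<phi>1 = \<psi>1"
    "\<phi>2 \<in> vmaps n b c" "delta arr b c M2 N \<phi>2 = \<psi>2"
    using assms unfolding delta_surj_def by meson
  have "delta arr (\<lambda>v. a v + b v) c (dsum arr a M1 M2) N (stack_cols a \<phi>1 \<phi>2) = \<psi>"
    unfolding delta_dsum_source \<phi>(2,4) by (auto simp: stack_cols_def \<psi>1_def \<psi>2_def fun_eq_iff)
  then show "\<exists>\<phi>\<in>vmaps n (\<lambda>v. a v + b v) c. delta arr (\<lambda>v. a v + b v) c (dsum arr a M1 M2) N \<phi> = \<psi>"
    using stack_cols_vmaps[OF \<phi>(1,3)] by blast
qed

lemma line_closed_reps: "line_closed {F. is_rep arr d F}"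
  unfolding line_closed_def is_rep_def line_def by auto

lemma delta_surj_common_source:
  fixes M1 M2 N1 N2 :: "'k::field_char_0 fam"
  assumes "is_rep arr a M1" "delta_surj n arr a b M1 N1"
    and "is_rep arr a M2" "delta_surj n arr a c M2 N2"
  shows "\<exists>M. is_rep arr a M \<and> delta_surj n arr a b M N1 \<and> delta_surj n arr a c M N2"
proof -
  obtain g1 g2 where "polyfun g1" "g1 M1 \<noteq> 0" "\<forall>F. g1 F \<noteq> 0 \<longrightarrow> delta_surj n arr a b F N1"
    "polyfun g2" "g2 M2 \<noteq> 0" "\<forall>F. g2 F \<noteq> 0 \<longrightarrow> delta_surj n arr a c F N2"
    using delta_surj_open[of "\<lambda>F. F" "\<lambda>F. N1", OF polyfun_entry polyfun_const assms(2)]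
      delta_surj_open[of "\<lambda>F. F" "\<lambda>F. N2", OF polyfun_entry polyfun_const assms(4)] by blast
  then show ?thesis
    using polyfun_common_nonzero[OF line_closed_reps[of arr a], where f = g1 and g = g2 and X = M1
      and Y = M2] assms(1,3) by auto
qed

lemma delta_surj_common_target:
  fixes M1 M2 N1 N2 :: "'k::field_char_0 fam"
  assumes "is_rep arr b N1" "delta_surj n arr a b M1 N1"
    and "is_rep arr b N2" "delta_surj n arr c b M2 N2"
  shows "\<exists>N. is_rep arr b N \<and> delta_surj n arr a b M1 N \<and> delta_surj n arr c b M2 N"
proof -
  obtain g1 g2 where "polyfun g1" "g1 N1 \<noteq> 0" "\<forall>F. g1 F \<noteq> 0 \<longrightarrow> delta_surj n arr a b M1 F"
    "polyfun g2" "g2 N2 \<noteq> 0" "\<forall>F. g2 F \<noteq> 0 \<longrightarrow> delta_surj n arr c b M2 F"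
    using delta_surj_open[of "\<lambda>F. M1" "\<lambda>F. F", OF polyfun_const polyfun_entry assms(2)]
      delta_surj_open[of "\<lambda>F. M2" "\<lambda>F. F", OF polyfun_const polyfun_entry assms(4)] by blast
  then show ?thesis
    using polyfun_common_nonzero[OF line_closed_reps[of arr b], where f = g1 and g = g2 and X = N1
      and Y = N2] assms(1,3) by auto
qed

lemma ext_gen_add_target:
  assumes "ext_gen TYPE('k::field_char_0) n arr a b = 0" "ext_gen TYPE('k) n arr a c = 0"
  shows "ext_gen TYPE('k) n arr a (\<lambda>v. b v + c v) = 0"
proof -
  obtain M1 M2 N1 N2 :: "'k fam"
    where "is_rep arr a M1" "is_rep arr b N1" "delta_surj n arr a b M1 N1"
      and "is_rep arr a M2" "is_rep arr c N2" "delta_surj n arr a c M2 N2"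
    using assms unfolding ext_gen_eq_0_iff by blast
  moreover from this obtain M where "is_rep arr a M" "delta_surj n arr a b M N1"
      "delta_surj n arr a c M N2"
    using delta_surj_common_source by metis
  ultimately show ?thesis
    unfolding ext_gen_eq_0_iff by (blast intro: is_rep_dsum delta_surj_dsum_target)
qed

lemma ext_gen_add_source:
  assumes "ext_gen TYPE('k::field_char_0) n arr a c = 0" "ext_gen TYPE('k) n arr b c = 0"
  shows "ext_gen TYPE('k) n arr (\<lambda>v. a v + b v) c = 0"
proof -
  obtain M1 M2 N1 N2 :: "'k fam"
    where "is_rep arr a M1" "is_rep arr c N1" "delta_surj n arr a c M1 N1"
      and "is_rep arr b M2" "is_rep arr c N2" "delta_surj n arr b c M2 N2"
    using assms unfolding ext_gen_eq_0_iff by blast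
  moreover from this obtain N where "is_rep arr c N" "delta_surj n arr a c M1 N"
      "delta_surj n arr b c M2 N"
    using delta_surj_common_target by metis
  ultimately show ?thesis
    unfolding ext_gen_eq_0_iff by (blast intro: is_rep_dsum delta_surj_dsum_source)
qed

lemma ext_gen_zero_target: "ext_gen TYPE('k::field) n arr a (\<lambda>v. 0) = 0"
  and ext_gen_zero_source: "ext_gen TYPE('k) n arr (\<lambda>v. 0) a = 0"
proof -
  have "delta_surj n arr a (\<lambda>v. 0) 0 (0 :: 'k fam)" "delta_surj n arr (\<lambda>v. 0) a 0 (0 :: 'k fam)"
    unfolding delta_surj_def
    by (auto simp: arrow_fam_def delta_def vmaps_def fun_eq_iff intro!: bexI[of _ 0])
  moreover have "is_rep arr d (0 :: 'k fam)" for d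
    by (simp add: is_rep_def)
  ultimately show "ext_gen TYPE('k) n arr a (\<lambda>v. 0) = 0" "ext_gen TYPE('k) n arr (\<lambda>v. 0) a = 0"
    unfolding ext_gen_eq_0_iff by blast+
qed

lemma ext_gen_sum_target:
  assumes "finite I" "\<And>l. l \<in> I \<Longrightarrow> ext_gen TYPE('k::field_char_0) n arr a (b l) = 0"
  shows "ext_gen TYPE('k) n arr a (\<lambda>v. \<Sum>l\<in>I. b l v) = 0"
  using assms by (induction I rule: finite_induct) (simp_all add: ext_gen_zero_target
    ext_gen_add_target)

lemma ext_gen_sum_source:
  assumes "finite I" "\<And>l. l \<in> I \<Longrightarrow> ext_gen TYPE('k::field_char_0) n arr (a l) b = 0"
  shows "ext_gen TYPE('k) n arr (\<lambda>v. \<Sum>l\<in>I. a l v) b = 0"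
  using assms by (induction I rule: finite_induct) (simp_all add: ext_gen_zero_source
    ext_gen_add_source)

section \<open>Block-triangular representations and unipotent conjugation\<close>

definition block_triangular ::
  "(nat \<times> nat) list \<Rightarrow> (nat \<Rightarrow> nat) \<Rightarrow> (nat \<Rightarrow> nat) \<Rightarrow> 'k::field fam \<Rightarrow> bool" where
  "block_triangular arr d1 d2 F \<longleftrightarrow> is_rep arr (\<lambda>v. d1 v + d2 v) F \<and>
     (\<forall>al i j. d1 (snd (arr!al)) \<le> i \<longrightarrow> j < d1 (fst (arr!al)) \<longrightarrow> F al i j = 0)"

definition sub_block :: "(nat \<times> nat) list \<Rightarrow> (nat \<Rightarrow> nat) \<Rightarrow> 'k::field fam \<Rightarrow> 'k fam" where
  "sub_block arr d1 F = (\<lambda>al i j. if i < d1 (snd (arr!al))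
      \<and> j < d1 (fst (arr!al)) then F al i j else 0)"

definition quot_block ::
  "(nat \<times> nat) list \<Rightarrow> (nat \<Rightarrow> nat) \<Rightarrow> (nat \<Rightarrow> nat) \<Rightarrow> 'k::field fam \<Rightarrow> 'k fam" where
  "quot_block arr d1 d2 F = (\<lambda>al i j. if i < d2 (snd (arr!al)) \<and> j < d2 (fst (arr!al))
      then F al (i + d1 (snd (arr!al))) (j + d1 (fst (arr!al))) else 0)"

lemma block_triangular_is_rep: "block_triangular arr d1 d2 F \<Longrightarrow> is_rep arr (\<lambda>v. d1 v + d2 v) F"
  by (simp add: block_triangular_def)

lemma is_rep_sub_block: "is_rep arr (\<lambda>v. d1 v + d2 v) F \<Longrightarrow> is_rep arr d1 (sub_block arr d1 F)"
  unfolding is_rep_def sub_block_def by auto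

lemma is_rep_quot_block: "is_rep arr (\<lambda>v. d1 v + d2 v) F \<Longrightarrow> is_rep arr d2 (quot_block arr d1 d2 F)"
  unfolding is_rep_def quot_block_def by auto

lemma block_triangular_dsum:
  "is_rep arr d1 M \<Longrightarrow> is_rep arr d2 N \<Longrightarrow> block_triangular arr d1 d2 (dsum arr d1 M N)"
  unfolding block_triangular_def using is_rep_dsum by (auto simp: dsum_def)

lemma sub_block_dsum: "is_rep arr d1 M \<Longrightarrow> sub_block arr d1 (dsum arr d1 M N) = M"
  unfolding is_rep_def sub_block_def dsum_def by (auto simp: fun_eq_iff)

lemma quot_block_dsum: "is_rep arr d2 N \<Longrightarrow> quot_block arr d1 d2 (dsum arr d1 M N) = N"
  unfolding is_rep_def quot_block_def dsum_def by (auto simp: fun_eq_iff)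

lemma polyfun_sub_block: "polyfun (\<lambda>F. sub_block arr d1 F al i j)"
  unfolding sub_block_def by (intro polyfun_if polyfun_entry polyfun_const)

lemma polyfun_quot_block: "polyfun (\<lambda>F. quot_block arr d1 d2 F al i j)"
  unfolding quot_block_def by (intro polyfun_if polyfun_entry polyfun_const)

lemma delta_sub_block:
  assumes "block_triangular arr d1 d2 F" "j < d1 (fst (arr!al))"
  shows "delta arr d1 c (sub_block arr d1 F) A (\<lambda>v i j. if j < d1 v then \<phi> v i j else 0) al i j
    = delta arr (\<lambda>v. d1 v + d2 v) c F A \<phi> al i j"
proof (cases "al < length arr \<and> i < c (snd (arr!al))")
  case True
  let ?t = "snd (arr!al)"
  have "(\<Sum>l<d1 ?t + d2 ?t. \<phi> ?t i l * F al l j) = (\<Sum>l<d1 ?t. \<phi> ?t i l * F al l j)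
      + (\<Sum>l<d2 ?t. \<phi> ?t i (l + d1 ?t) * F al (l + d1 ?t) j)"
    by (rule sum_lessThan_add_split)
  moreover have "(\<Sum>l<d2 ?t. \<phi> ?t i (l + d1 ?t) * F al (l + d1 ?t) j) = 0"
    using assms by (intro sum.neutral) (auto simp: block_triangular_def)
  ultimately show ?thesis
    using True assms(2) by (simp add: delta_apply sub_block_def)
qed (auto simp: delta_def)

lemma delta_quot_block:
  assumes "block_triangular arr d1 d2 F" "i < d2 (snd (arr!al))"
  shows "delta arr c d2 A (quot_block arr d1 d2 F)
      (\<lambda>v i j. if i < d2 v then \<phi> v (i + d1 v) j else 0) al i j
    = delta arr c (\<lambda>v. d1 v + d2 v) A F \<phi> al (i + d1 (snd (arr!al))) j"
proof (cases "al < length arr \<and> j < c (fst (arr!al))")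
  case True
  let ?t = "snd (arr!al)" and ?s = "fst (arr!al)"
  have "(\<Sum>l<d1 ?s + d2 ?s. F al (i + d1 ?t) l * \<phi> ?s l j)
      = (\<Sum>l<d1 ?s. F al (i + d1 ?t) l * \<phi> ?s l j)
      + (\<Sum>l<d2 ?s. F al (i + d1 ?t) (l + d1 ?s) * \<phi> ?s (l + d1 ?s) j)"
    by (rule sum_lessThan_add_split)
  moreover have "(\<Sum>l<d1 ?s. F al (i + d1 ?t) l * \<phi> ?s l j) = 0"
    using assms by (intro sum.neutral) (auto simp: block_triangular_def)
  ultimately show ?thesis
    using True assms(2) by (simp add: delta_apply quot_block_def)
qed (auto simp: delta_def)

lemma delta_surj_sub_block:
  fixes F A :: "'k::field fam"
  assumes "block_triangular arr d1 d2 F" "delta_surj n arr (\<lambda>v. d1 v + d2 v) c F A"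
  shows "delta_surj n arr d1 c (sub_block arr d1 F) A"
  unfolding delta_surj_def
proof (intro allI impI)
  fix \<psi> :: "'k fam" assume \<psi>: "arrow_fam arr d1 c \<psi>"
  then have "arrow_fam arr (\<lambda>v. d1 v + d2 v) c \<psi>" by (auto simp: arrow_fam_def)
  then obtain \<phi> where \<phi>: "\<phi> \<in> vmaps n (\<lambda>v. d1 v + d2 v) c" "delta arr (\<lambda>v. d1 v + d2 v) c F A \<phi> = \<psi>"
    using assms(2) by (auto simp: delta_surj_def)
  let ?\<phi>1 = "\<lambda>v i j. if j < d1 v then \<phi> v i j else 0"
  have "delta arr d1 c (sub_block arr d1 F) A ?\<phi>1 al i j = \<psi> al i j" for al i j
  proof (cases "j < d1 (fst (arr!al))")
    case True
    then show ?thesis using delta_sub_block[OF assms(1) True] \<phi>(2) by simp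
  next
    case False
    then show ?thesis using \<psi> by (simp add: arrow_fam_def delta_def)
  qed
  then have "delta arr d1 c (sub_block arr d1 F) A ?\<phi>1 = \<psi>" by blast
  moreover have "?\<phi>1 \<in> vmaps n d1 c" using \<phi>(1) by (auto simp: vmaps_def)
  ultimately show "\<exists>\<phi>\<in>vmaps n d1 c. delta arr d1 c (sub_block arr d1 F) A \<phi> = \<psi>" by blast
qed

lemma delta_surj_quot_block:
  fixes F A :: "'k::field fam"
  assumes "block_triangular arr d1 d2 F" "delta_surj n arr c (\<lambda>v. d1 v + d2 v) A F"
  shows "delta_surj n arr c d2 A (quot_block arr d1 d2 F)"
  unfolding delta_surj_def
proof (intro allI impI)
  fix \<psi> :: "'k fam" assume \<psi>: "arrow_fam arr c d2 \<psi>"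
  let ?\<psi>' = "\<lambda>al i j. if d1 (snd (arr!al)) \<le> i then \<psi> al (i - d1 (snd (arr!al))) j else 0"
  have "arrow_fam arr c (\<lambda>v. d1 v + d2 v) ?\<psi>'" using \<psi> by (auto simp: arrow_fam_def not_le)
  then obtain \<phi> where \<phi>: "\<phi> \<in> vmaps n c (\<lambda>v. d1 v + d2 v)"
      "delta arr c (\<lambda>v. d1 v + d2 v) A F \<phi> = ?\<psi>'"
    using assms(2) by (auto simp: delta_surj_def)
  let ?\<phi>2 = "\<lambda>v i j. if i < d2 v then \<phi> v (i + d1 v) j else 0"
  have "delta arr c d2 A (quot_block arr d1 d2 F) ?\<phi>2 al i j = \<psi> al i j" for al i j
  proof (cases "i < d2 (snd (arr!al))")
    case True
    then show ?thesis using delta_quot_block[OF assms(1) True] \<phi>(2) by simp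
  next
    case False
    then show ?thesis using \<psi> by (simp add: arrow_fam_def delta_def)
  qed
  then have "delta arr c d2 A (quot_block arr d1 d2 F) ?\<phi>2 = \<psi>" by blast
  moreover have "?\<phi>2 \<in> vmaps n c d2" using \<phi>(1) by (auto simp: vmaps_def)
  ultimately show "\<exists>\<phi>\<in>vmaps n c d2. delta arr c d2 A (quot_block arr d1 d2 F) \<phi> = \<psi>" by blast
qed

type_synonym 'k matfun = "nat \<Rightarrow> nat \<Rightarrow> 'k"

definition mmult :: "nat \<Rightarrow> 'k::field matfun \<Rightarrow> 'k matfun \<Rightarrow> 'k matfun" where
  "mmult k A B = (\<lambda>i j. \<Sum>l<k. A i l * B l j)"

definition mscale :: "'k::field \<Rightarrow> 'k matfun \<Rightarrow> 'k matfun" where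
  "mscale c A = (\<lambda>i j. c * A i j)"

lemma mmult_assoc: "mmult k (mmult k' A B) C = mmult k' A (mmult k B C)"
  unfolding mmult_def
  by (auto simp: fun_eq_iff sum_distrib_left sum_distrib_right mult.assoc intro: sum.swap)

lemma mmult_assoc_left: "mmult k' A (mmult k B C) = mmult k (mmult k' A B) C"
  by (rule mmult_assoc[symmetric])

lemma mmult_add_left: "mmult k (A + B) C = mmult k A C + mmult k B C"
  by (simp add: mmult_def fun_eq_iff algebra_simps sum.distrib)
lemma mmult_add_right: "mmult k A (B + C) = mmult k A B + mmult k A C"
  by (simp add: mmult_def fun_eq_iff algebra_simps sum.distrib)
lemma mmult_diff_left: "mmult k (A - B) C = mmult k A C - mmult k B C"
  by (simp add: mmult_def fun_eq_iff algebra_simps sum_subtractf)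
lemma mmult_diff_right: "mmult k A (B - C) = mmult k A B - mmult k A C"
  by (simp add: mmult_def fun_eq_iff algebra_simps sum_subtractf)
lemma mmult_zero_left: "mmult k 0 C = 0"
  by (simp add: mmult_def fun_eq_iff)
lemma mmult_zero_right: "mmult k A 0 = 0"
  by (simp add: mmult_def fun_eq_iff)
lemma mmult_mscale_left: "mmult k (mscale c A) B = mscale c (mmult k A B)"
  by (simp add: mmult_def mscale_def fun_eq_iff sum_distrib_left algebra_simps)
lemma mmult_mscale_right: "mmult k A (mscale c B) = mscale c (mmult k A B)"
  by (simp add: mmult_def mscale_def fun_eq_iff sum_distrib_left algebra_simps)
lemma mscale_add: "mscale c (A + B) = mscale c A + mscale c B"
  by (simp add: mscale_def fun_eq_iff algebra_simps)
lemma mscale_diff: "mscale c (A - B) = mscale c A - mscale c B"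
  by (simp add: mscale_def fun_eq_iff algebra_simps)
lemma mscale_mscale: "mscale c (mscale c' A) = mscale (c * c') A"
  by (simp add: mscale_def fun_eq_iff algebra_simps)

lemmas mmult_simps = mmult_assoc_left mmult_add_left mmult_add_right mmult_diff_left
    mmult_diff_right mmult_zero_left mmult_zero_right mmult_mscale_left mmult_mscale_right

text \<open>\<^term>\<open>conj_mat kt ks T S e\<close> is \<open>(1 + T) e (1 - S)\<close>; for \<open>T\<^sup>2 = S\<^sup>2 = 0\<close> it is \<open>e\<close>
  transported along the automorphisms \<open>1 + S\<close> and \<open>1 + T\<close> of source and target.\<close>

definition conj_mat :: "nat \<Rightarrow> nat \<Rightarrow> 'k::field matfun \<Rightarrow> 'k matfun \<Rightarrow> 'k matfun \<Rightarrow> 'k matfun" where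
  "conj_mat kt ks T S e = e + mmult kt T e - mmult ks e S - mmult ks (mmult kt T e) S"

lemma conj_mat_comp:
  assumes "mmult kt T' T = 0" "mmult ks S S' = 0"
  shows "conj_mat kt ks T' S' (conj_mat kt ks T S e) = conj_mat kt ks (T' + T) (S' + S) e"
proof -
  have z1: "mmult kt (mmult kt Z T') T = 0" for Z using assms(1) by (simp add: mmult_assoc
      mmult_zero_right)
  have z2: "mmult ks (mmult ks Z S) S' = 0" for Z using assms(2) by (simp add: mmult_assoc
      mmult_zero_right)
  show ?thesis unfolding conj_mat_def
    by (simp add: mmult_simps assms z1 z2 algebra_simps)
qed

lemma conj_mat_zero_conj: "conj_mat kt ks 0 0 e = e"
  by (simp add: conj_mat_def mmult_simps)

definition unip_conj :: "(nat \<times> nat) list \<Rightarrow> (nat \<Rightarrow> nat) \<Rightarrow> 'k::field fam \<Rightarrow> 'k fam \<Rightarrow> 'k fam" where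
  "unip_conj arr d X E = (\<lambda>al. conj_mat (d (snd (arr!al))) (d (fst (arr!al))) (X (snd (arr!al)))
      (X (fst (arr!al))) (E al))"

definition lower_nilpotent :: "nat \<Rightarrow> (nat \<Rightarrow> nat) \<Rightarrow> (nat \<Rightarrow> nat) \<Rightarrow> 'k::field fam \<Rightarrow> bool" where
  "lower_nilpotent n d1 d2 X \<longleftrightarrow> X \<in> vmaps n (\<lambda>v. d1 v + d2 v) (\<lambda>v. d1 v + d2 v) \<and>
     (\<forall>v i j. X v i j \<noteq> 0 \<longrightarrow> d1 v \<le> i \<and> j < d1 v)"

lemma lower_nilpotent_mmult:
  "lower_nilpotent n d1 d2 X \<Longrightarrow> lower_nilpotent n d1 d2 Y \<Longrightarrow> mmult k (X v) (Y v) = 0"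
  unfolding lower_nilpotent_def mmult_def by (auto simp: fun_eq_iff intro!: sum.neutral) (metis leD)

lemma lower_nilpotent_add:
  "lower_nilpotent n d1 d2 X \<Longrightarrow> lower_nilpotent n d1 d2 Y \<Longrightarrow> lower_nilpotent n d1 d2 (X + Y)"
  unfolding lower_nilpotent_def vmaps_def by (auto) (metis add.right_neutral)+

lemma lower_nilpotent_uminus: "lower_nilpotent n d1 d2 X \<Longrightarrow> lower_nilpotent n d1 d2 (- X)"
  unfolding lower_nilpotent_def vmaps_def by auto

lemma lower_nilpotent_zero: "lower_nilpotent n d1 d2 0"
  unfolding lower_nilpotent_def vmaps_def by auto

lemma lower_nilpotent_mscale:
  "lower_nilpotent n d1 d2 X \<Longrightarrow> lower_nilpotent n d1 d2 (\<lambda>v. mscale c (X v))"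
  unfolding lower_nilpotent_def vmaps_def mscale_def by auto

lemma lower_nilpotent_vmaps:
  "lower_nilpotent n d1 d2 X \<Longrightarrow> X \<in> vmaps n (\<lambda>v. d1 v + d2 v) (\<lambda>v. d1 v + d2 v)"
  by (simp add: lower_nilpotent_def)

lemma unip_conj_comp:
  assumes "lower_nilpotent n d1 d2 X" "lower_nilpotent n d1 d2 Y"
  shows "unip_conj arr (\<lambda>v. d1 v + d2 v) X (unip_conj arr (\<lambda>v. d1 v + d2 v) Y E)
      = unip_conj arr (\<lambda>v. d1 v + d2 v) (X + Y) E"
  unfolding unip_conj_def
  using lower_nilpotent_mmult[OF assms(1,2)] lower_nilpotent_mmult[OF assms(2,1)]
  by (simp add: conj_mat_comp fun_eq_iff del: plus_fun_apply) (simp add: plus_fun_def)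

lemma unip_conj_zero: "unip_conj arr d 0 E = E"
  unfolding unip_conj_def by (simp only: zero_fun_apply conj_mat_zero_conj)

lemma unip_conj_inv_right:
  assumes "lower_nilpotent n d1 d2 X"
  shows "unip_conj arr (\<lambda>v. d1 v + d2 v) X (unip_conj arr (\<lambda>v. d1 v + d2 v) (- X) E) = E"
  using unip_conj_comp[OF assms lower_nilpotent_uminus[OF assms]] by (simp add: unip_conj_zero)

lemma unip_conj_inv_left:
  assumes "lower_nilpotent n d1 d2 X"
  shows "unip_conj arr (\<lambda>v. d1 v + d2 v) (- X) (unip_conj arr (\<lambda>v. d1 v + d2 v) X E) = E"
  using unip_conj_comp[OF lower_nilpotent_uminus[OF assms] assms] by (simp add: unip_conj_zero)

definition mat_supp :: "nat \<Rightarrow> nat \<Rightarrow> 'k::field matfun \<Rightarrow> bool" where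
  "mat_supp r c A \<longleftrightarrow> (\<forall>i j. \<not> (i < r \<and> j < c) \<longrightarrow> A i j = 0)"

lemma mat_supp_mmult: "mat_supp r k0 A \<Longrightarrow> mat_supp k1 c B \<Longrightarrow> mat_supp r c (mmult k A B)"
  unfolding mat_supp_def mmult_def by (auto intro!: sum.neutral)

lemma mat_supp_add: "mat_supp r c A \<Longrightarrow> mat_supp r c B \<Longrightarrow> mat_supp r c (A + B)"
  unfolding mat_supp_def by auto
lemma mat_supp_diff: "mat_supp r c A \<Longrightarrow> mat_supp r c B \<Longrightarrow> mat_supp r c (A - B)"
  unfolding mat_supp_def by auto
lemma arrow_fam_iff_mat_supp: "arrow_fam arr a b \<psi>
    \<longleftrightarrow> (\<forall>al. (al < length arr \<longrightarrow> mat_supp (b (snd (arr!al))) (a (fst (arr!al))) (\<psi> al))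
   \<and> (\<not> al < length arr \<longrightarrow> \<psi> al = 0))"
  unfolding arrow_fam_def mat_supp_def by (auto simp: fun_eq_iff)

lemma vmaps_iff_mat_supp:
  "\<phi> \<in> vmaps n a b \<longleftrightarrow> (\<forall>v. (v < n \<longrightarrow> mat_supp (b v) (a v) (\<phi> v)) \<and> (\<not> v < n \<longrightarrow> \<phi> v = 0))"
  unfolding vmaps_def mat_supp_def by (auto simp: fun_eq_iff)

lemma mat_supp_vmaps: "\<phi> \<in> vmaps n a b \<Longrightarrow> mat_supp (b v) (a v) (\<phi> v)"
  unfolding vmaps_def mat_supp_def by auto

lemma mat_supp_conj_mat:
  "mat_supp kt ks e \<Longrightarrow> mat_supp kt kt T \<Longrightarrow> mat_supp ks ks S \<Longrightarrow> mat_supp kt ks (conj_mat kt ks T S e)"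
  unfolding conj_mat_def by (intro mat_supp_diff mat_supp_add mat_supp_mmult) (auto intro:
    mat_supp_mmult)

lemma conj_mat_zero: "conj_mat kt ks T S 0 = 0"
  by (simp add: conj_mat_def mmult_simps)

lemma is_rep_unip_conj:
  assumes "is_rep arr d E" "X \<in> vmaps n d d"
  shows "is_rep arr d (unip_conj arr d X E)"
  unfolding is_rep_iff_arrow_fam arrow_fam_iff_mat_supp
proof (intro allI conjI impI)
  fix al assume al: "al < length arr"
  have "mat_supp (d (snd (arr!al))) (d (fst (arr!al))) (E al)"
    using assms(1) al unfolding is_rep_iff_arrow_fam arrow_fam_iff_mat_supp by blast
  then show "mat_supp (d (snd (arr!al))) (d (fst (arr!al))) (unip_conj arr d X E al)"
    unfolding unip_conj_def by (intro mat_supp_conj_mat mat_supp_vmaps[OF assms(2)])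
next
  fix al assume al: "\<not> al < length arr"
  have "E al = 0" using assms(1) al unfolding is_rep_iff_arrow_fam arrow_fam_iff_mat_supp by blast
  then show "unip_conj arr d X E al = 0" by (simp add: unip_conj_def conj_mat_zero)
qed

lemma delta_eq_mmult:
  assumes "\<phi> \<in> vmaps n a b" "is_rep arr a M" "is_rep arr b N"
  shows "delta arr a b M N \<phi> al = (if al < length arr then
     mmult (a (snd (arr!al))) (\<phi> (snd (arr!al))) (M al) - mmult (b (fst (arr!al))) (N al) (\<phi> (fst
       (arr!al))) else 0)"
proof (cases "al < length arr")
  case True
  let ?t = "snd (arr!al)" and ?s = "fst (arr!al)"
  have ms: "mat_supp (b ?t) (a ?s) (mmult (a ?t) (\<phi> ?t) (M al) - mmult (b ?s) (N al) (\<phi> ?s))"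
  proof -
    have mM: "mat_supp (a ?t) (a ?s) (M al)"
      using assms(2) True unfolding is_rep_iff_arrow_fam arrow_fam_iff_mat_supp by blast
    have mN: "mat_supp (b ?t) (b ?s) (N al)"
      using assms(3) True unfolding is_rep_iff_arrow_fam arrow_fam_iff_mat_supp by blast
    show ?thesis by (rule mat_supp_diff[OF mat_supp_mmult[OF mat_supp_vmaps[OF assms(1)] mM]
        mat_supp_mmult[OF mN mat_supp_vmaps[OF assms(1)]]])
  qed
  show ?thesis
  proof (intro ext)
    fix i j
    show "delta arr a b M N \<phi> al i j = (if al < length arr then mmult (a ?t) (\<phi> ?t) (M al)
        - mmult (b ?s) (N al) (\<phi> ?s) else 0) i j"
      using True ms by (cases "i < b ?t \<and> j < a ?s") (auto simp: delta_def mmult_def mat_supp_def)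
  qed
next
  case False then show ?thesis by (auto simp: delta_def fun_eq_iff)
qed

lemma mmult_conj_mat_source:
  assumes TT: "mmult kt T T = 0" and SS: "mmult ks S S = 0"
    and K: "mmult kt P e - mmult kb Aa Q = \<Psi> + mmult ks \<Psi> S"
  shows "mmult kt (P - mmult kt P T) (conj_mat kt ks T S e) - mmult kb Aa (Q - mmult ks Q S) = \<Psi>"
proof -
  have z1: "mmult kt (mmult kt Z T) T = 0" for Z using TT by (simp add: mmult_assoc
      mmult_zero_right)
  have z2: "mmult ks (mmult ks Z S) S = 0" for Z using SS by (simp add: mmult_assoc
      mmult_zero_right)
  have "mmult kt (P - mmult kt P T) (conj_mat kt ks T S e) - mmult kb Aa (Q - mmult ks Q S)
      = (mmult kt P e - mmult kb Aa Q) - mmult ks (mmult kt P e - mmult kb Aa Q) S"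
    unfolding conj_mat_def by (simp add: mmult_simps TT SS z1 z2 algebra_simps)
  also have "\<dots> = \<Psi>" unfolding K by (simp add: mmult_simps z2)
  finally show ?thesis .
qed

lemma mmult_conj_mat_target:
  assumes TT: "mmult kt T T = 0" and SS: "mmult ks S S = 0"
    and K: "mmult kb P Aa - mmult ks e Q = \<Psi> - mmult kt T \<Psi>"
  shows "mmult kb (P + mmult kt T P) Aa - mmult ks (conj_mat kt ks T S e) (Q + mmult ks S Q) = \<Psi>"
proof -
  have z1: "mmult kt (mmult kt Z T) T = 0" for Z using TT by (simp add: mmult_assoc
      mmult_zero_right)
  have z2: "mmult ks (mmult ks Z S) S = 0" for Z using SS by (simp add: mmult_assoc
      mmult_zero_right)
  have "mmult kb (P + mmult kt T P) Aa - mmult ks (conj_mat kt ks T S e) (Q + mmult ks S Q)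
      = (mmult kb P Aa - mmult ks e Q) + mmult kt T (mmult kb P Aa - mmult ks e Q)"
    unfolding conj_mat_def by (simp add: mmult_simps TT SS z1 z2 algebra_simps)
  also have "\<dots> = \<Psi>" unfolding K by (simp add: mmult_simps TT)
  finally show ?thesis .
qed

lemma arrow_fam_add_mmult_source:
  assumes "arrow_fam arr d b \<psi>" "X \<in> vmaps n d d"
  shows "arrow_fam arr d b (\<lambda>al. \<psi> al + mmult (d (fst (arr!al))) (\<psi> al) (X (fst (arr!al))))"
  using assms(1) mat_supp_vmaps[OF assms(2)] unfolding arrow_fam_iff_mat_supp
  by (auto intro!: mat_supp_add mat_supp_mmult simp: mmult_zero_left)

lemma arrow_fam_diff_mmult_target:
  assumes "arrow_fam arr b d \<psi>" "X \<in> vmaps n d d"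
  shows "arrow_fam arr b d (\<lambda>al. \<psi> al - mmult (d (snd (arr!al))) (X (snd (arr!al))) (\<psi> al))"
  using assms(1) mat_supp_vmaps[OF assms(2)] unfolding arrow_fam_iff_mat_supp
  by (auto intro!: mat_supp_diff mat_supp_mmult simp: mmult_zero_right)

lemma delta_surj_unip_conj_source:
  fixes E A X :: "'k::field fam"
  assumes E: "is_rep arr d E" and A: "is_rep arr b A" and X: "X \<in> vmaps n d d"
    and XX: "\<And>v. mmult (d v) (X v) (X v) = 0" and s: "delta_surj n arr d b E A"
  shows "delta_surj n arr d b (unip_conj arr d X E) A"
  unfolding delta_surj_def
proof (intro allI impI)
  fix \<psi> :: "'k fam" assume h: "arrow_fam arr d b \<psi>"
  define \<psi>' where "\<psi>' = (\<lambda>al. \<psi> al + mmult (d (fst (arr!al))) (\<psi> al) (X (fst (arr!al))))"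
  have "arrow_fam arr d b \<psi>'" unfolding \<psi>'_def by (rule arrow_fam_add_mmult_source[OF h X])
  then obtain \<phi>' where p: "\<phi>' \<in> vmaps n d b" "delta arr d b E A \<phi>' = \<psi>'" using s by (auto simp:
      delta_surj_def)
  define \<phi> where "\<phi> = (\<lambda>v. \<phi>' v - mmult (d v) (\<phi>' v) (X v))"
  have pv: "\<phi> \<in> vmaps n d b" using p(1) X unfolding vmaps_iff_mat_supp \<phi>_def
    by (auto intro!: mat_supp_diff mat_supp_mmult simp: mmult_zero_left)
  have cr: "is_rep arr d (unip_conj arr d X E)" by (rule is_rep_unip_conj[OF E X])
  have "delta arr d b (unip_conj arr d X E) A \<phi> = \<psi>"
  proof (rule ext)
    fix al
    show "delta arr d b (unip_conj arr d X E) A \<phi> al = \<psi> al"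
    proof (cases "al < length arr")
      case True
      have "delta arr d b E A \<phi>' al = \<psi>' al" using p(2) by simp
      then have K: "mmult (d (snd (arr!al))) (\<phi>' (snd (arr!al))) (E al)
          - mmult (b (fst (arr!al))) (A al) (\<phi>' (fst (arr!al)))
          = \<psi> al + mmult (d (fst (arr!al))) (\<psi> al) (X (fst (arr!al)))"
        using True delta_eq_mmult[OF p(1) E A] by (simp add: \<psi>'_def)
      show ?thesis
        using True delta_eq_mmult[OF pv cr A] mmult_conj_mat_source[OF XX XX K]
        by (simp add: unip_conj_def \<phi>_def)
    next
      case False then show ?thesis using h delta_eq_mmult[OF pv cr A] by (simp add:
        arrow_fam_iff_mat_supp)
    qed
  qed
  then show "\<exists>\<phi>\<in>vmaps n d b. delta arr d b (unip_conj arr d X E) A \<phi> = \<psi>" using pv by blast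
qed

lemma delta_surj_unip_conj_target:
  fixes E A X :: "'k::field fam"
  assumes E: "is_rep arr d E" and A: "is_rep arr b A" and X: "X \<in> vmaps n d d"
    and XX: "\<And>v. mmult (d v) (X v) (X v) = 0" and s: "delta_surj n arr b d A E"
  shows "delta_surj n arr b d A (unip_conj arr d X E)"
  unfolding delta_surj_def
proof (intro allI impI)
  fix \<psi> :: "'k fam" assume h: "arrow_fam arr b d \<psi>"
  define \<psi>' where "\<psi>' = (\<lambda>al. \<psi> al - mmult (d (snd (arr!al))) (X (snd (arr!al))) (\<psi> al))"
  have "arrow_fam arr b d \<psi>'" unfolding \<psi>'_def by (rule arrow_fam_diff_mmult_target[OF h X])
  then obtain \<phi>' where p: "\<phi>' \<in> vmaps n b d" "delta arr b d A E \<phi>' = \<psi>'" using s by (auto simp: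
      delta_surj_def)
  define \<phi> where "\<phi> = (\<lambda>v. \<phi>' v + mmult (d v) (X v) (\<phi>' v))"
  have pv: "\<phi> \<in> vmaps n b d" using p(1) X unfolding vmaps_iff_mat_supp \<phi>_def
    by (auto intro!: mat_supp_add mat_supp_mmult simp: mmult_zero_right)
  have cr: "is_rep arr d (unip_conj arr d X E)" by (rule is_rep_unip_conj[OF E X])
  have "delta arr b d A (unip_conj arr d X E) \<phi> = \<psi>"
  proof (rule ext)
    fix al
    show "delta arr b d A (unip_conj arr d X E) \<phi> al = \<psi> al"
    proof (cases "al < length arr")
      case True
      have "delta arr b d A E \<phi>' al = \<psi>' al" using p(2) by simp
      then have K: "mmult (b (snd (arr!al))) (\<phi>' (snd (arr!al))) (A al)
          - mmult (d (fst (arr!al))) (E al) (\<phi>' (fst (arr!al)))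
          = \<psi> al - mmult (d (snd (arr!al))) (X (snd (arr!al))) (\<psi> al)"
        using True delta_eq_mmult[OF p(1) A E] by (simp add: \<psi>'_def)
      show ?thesis
        using True delta_eq_mmult[OF pv A cr] mmult_conj_mat_target[OF XX XX K]
        by (simp add: unip_conj_def \<phi>_def)
    next
      case False then show ?thesis using h delta_eq_mmult[OF pv A cr] by (simp add:
        arrow_fam_iff_mat_supp)
    qed
  qed
  then show "\<exists>\<phi>\<in>vmaps n b d. delta arr b d A (unip_conj arr d X E) \<phi> = \<psi>" using pv by blast
qed

lemma line_apply_mat: "line E w t al = E al + mscale t (w al)"
  by (simp add: line_def mscale_def fun_eq_iff)

lemma conj_mat_line:
  "conj_mat kt ks T S (e + mscale c w) = conj_mat kt ks T S e + mscale c (conj_mat kt ks T S w)"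
  by (simp add: conj_mat_def mmult_simps mscale_add mscale_diff algebra_simps)

lemma unip_conj_line:
  "unip_conj arr d X (line E w t) = line (unip_conj arr d X E) (unip_conj arr d X w) t"
  by (rule ext) (simp add: unip_conj_def line_apply_mat conj_mat_line)

lemma polyfun_unip_conj: "polyfun (\<lambda>F. unip_conj arr d X F al i j)"
  unfolding unip_conj_def conj_mat_def mmult_def
  by (auto intro!: polyfun_diff polyfun_add polyfun_sum polyfun_cmult polyfun_multc polyfun_entry)

definition lie_action :: "(nat \<times> nat) list \<Rightarrow> (nat \<Rightarrow> nat) \<Rightarrow> 'k::field fam \<Rightarrow> 'k fam \<Rightarrow> 'k fam" where
  "lie_action arr d Y F = (\<lambda>al. mmult (d (snd (arr!al))) (Y (snd (arr!al))) (F al)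
      - mmult (d (fst (arr!al))) (F al) (Y (fst (arr!al))))"

definition lie_square :: "(nat \<times> nat) list \<Rightarrow> (nat \<Rightarrow> nat) \<Rightarrow> 'k::field fam \<Rightarrow> 'k fam \<Rightarrow> 'k fam" where
  "lie_square arr d Y F = (\<lambda>al. mmult (d (fst (arr!al)))
      (mmult (d (snd (arr!al))) (Y (snd (arr!al))) (F al)) (Y (fst (arr!al))))"

lemma conj_mat_mscale: "conj_mat kt ks (mscale t T) (mscale t S) e
    = e + mscale t (mmult kt T e - mmult ks e S) - mscale (t * t) (mmult ks (mmult kt T e) S)"
  by (simp add: conj_mat_def mmult_simps mscale_diff mscale_mscale)

lemma unip_conj_scaled: "unip_conj arr d (\<lambda>v. mscale t (Y v)) F =
   poly_curve (\<lambda>al i j. [:F al i j, lie_action arr d Y F al i j, - lie_square arr d Y F al i j:]) t"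
proof -
  have "unip_conj arr d (\<lambda>v. mscale t (Y v)) F
      = (\<lambda>al. F al + mscale t (lie_action arr d Y F al) - mscale (t*t) (lie_square arr d Y F al))"
    by (simp add: unip_conj_def conj_mat_mscale lie_action_def lie_square_def)
  then show ?thesis by (simp add: poly_curve_def mscale_def fun_eq_iff algebra_simps)
qed

lemma curve_coeff_0_unip_conj: "curve_coeff (\<lambda>al i j.
    [:F al i j, lie_action arr d Y F al i j, - lie_square arr d Y F al i j:]) 0 = F"
  by (simp add: curve_coeff_def)
lemma curve_coeff_1_unip_conj: "curve_coeff (\<lambda>al i j.
    [:F al i j, lie_action arr d Y F al i j, - lie_square arr d Y F al i j:]) 1 = lie_action arr d
      Y F"
  by (simp add: curve_coeff_def)

lemma is_rep_lie_action:
  assumes "is_rep arr d F" "Y \<in> vmaps n d d"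
  shows "is_rep arr d (lie_action arr d Y F)"
  using assms(1) mat_supp_vmaps[OF assms(2)]
  unfolding is_rep_iff_arrow_fam arrow_fam_iff_mat_supp lie_action_def
  by (auto intro!: mat_supp_diff mat_supp_mmult simp: mmult_zero_left mmult_zero_right)

lemma delta_surj_source_if_unip_conj:
  assumes X: "lower_nilpotent n d1 d2 X" and F: "is_rep arr (\<lambda>v. d1 v + d2 v) F" and A:
      "is_rep arr b A"
    and "delta_surj n arr (\<lambda>v. d1 v + d2 v) b (unip_conj arr (\<lambda>v. d1 v + d2 v) X F) A"
  shows "delta_surj n arr (\<lambda>v. d1 v + d2 v) b F A"
proof -
  have mX: "lower_nilpotent n d1 d2 (- X)" using X by (rule lower_nilpotent_uminus)
  have "delta_surj n arr (\<lambda>v. d1 v + d2 v) b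
      (unip_conj arr (\<lambda>v. d1 v + d2 v) (- X) (unip_conj arr (\<lambda>v. d1 v + d2 v) X F)) A"
    using delta_surj_unip_conj_source[OF is_rep_unip_conj[OF F lower_nilpotent_vmaps[OF X]] A
        lower_nilpotent_vmaps[OF mX] lower_nilpotent_mmult[OF mX mX] assms(4)] .
  then show ?thesis by (simp add: unip_conj_inv_left[OF X])
qed

lemma delta_surj_target_if_unip_conj:
  assumes X: "lower_nilpotent n d1 d2 X" and F: "is_rep arr (\<lambda>v. d1 v + d2 v) F" and A:
      "is_rep arr b A"
    and "delta_surj n arr b (\<lambda>v. d1 v + d2 v) A (unip_conj arr (\<lambda>v. d1 v + d2 v) X F)"
  shows "delta_surj n arr b (\<lambda>v. d1 v + d2 v) A F"
proof -
  have mX: "lower_nilpotent n d1 d2 (- X)" using X by (rule lower_nilpotent_uminus)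
  have "delta_surj n arr b (\<lambda>v. d1 v + d2 v) A
      (unip_conj arr (\<lambda>v. d1 v + d2 v) (- X) (unip_conj arr (\<lambda>v. d1 v + d2 v) X F))"
    using delta_surj_unip_conj_target[OF is_rep_unip_conj[OF F lower_nilpotent_vmaps[OF X]] A
        lower_nilpotent_vmaps[OF mX] lower_nilpotent_mmult[OF mX mX] assms(4)] .
  then show ?thesis by (simp add: unip_conj_inv_left[OF X])
qed

section \<open>Generic subrepresentations and quotients\<close>

definition lower_part :: "(nat \<times> nat) list \<Rightarrow> (nat \<Rightarrow> nat) \<Rightarrow> 'k::field_char_0 fam \<Rightarrow> 'k fam" where
  "lower_part arr d1 w = (\<lambda>al i j. if d1 (snd (arr!al)) \<le> i
      \<and> j < d1 (fst (arr!al)) then w al i j else 0)"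
definition upper_part :: "(nat \<times> nat) list \<Rightarrow> (nat \<Rightarrow> nat) \<Rightarrow> 'k::field_char_0 fam \<Rightarrow> 'k fam" where
  "upper_part arr d1 w = (\<lambda>al i j. if d1 (snd (arr!al)) \<le> i
      \<and> j < d1 (fst (arr!al)) then 0 else w al i j)"

lemma upper_part_add_lower_part: "upper_part arr d1 w + lower_part arr d1 w = w"
  by (auto simp: plus_fun_def upper_part_def lower_part_def fun_eq_iff)

lemma block_triangular_upper_part:
  "is_rep arr (\<lambda>v. d1 v + d2 v) w \<Longrightarrow> block_triangular arr d1 d2 (upper_part arr d1 w)"
  unfolding block_triangular_def is_rep_def upper_part_def by auto

lemma block_triangular_line: "block_triangular arr d1 d2 F \<Longrightarrow> block_triangular arr d1 d2 W
    \<Longrightarrow> block_triangular arr d1 d2 (line F W t)"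
  unfolding block_triangular_def is_rep_def line_def by auto

lemma line_closed_block_triangular: "line_closed {F. block_triangular arr d1 d2 F}"
  unfolding line_closed_def block_triangular_def is_rep_def line_def by auto

lemma block_triangular_zero: "block_triangular arr d1 d2 0"
  unfolding block_triangular_def is_rep_def by auto

definition vanishes_on_conjugates ::
  "nat \<Rightarrow> (nat \<times> nat) list \<Rightarrow> (nat \<Rightarrow> nat) \<Rightarrow> (nat \<Rightarrow> nat) \<Rightarrow> ('k::field_char_0 fam \<Rightarrow> 'k) \<Rightarrow> bool" where
  "vanishes_on_conjugates n arr d1 d2 h \<longleftrightarrow> polyfun h
      \<and> (\<forall>X F. lower_nilpotent n d1 d2 X \<longrightarrow> block_triangular arr d1 d2 F \<longrightarrow> h (unip_conj arr (\<lambda>v. d1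
        v + d2 v) X F) = 0)"

lemma vanishes_on_conjugatesD:
  "vanishes_on_conjugates n arr d1 d2 h \<Longrightarrow> lower_nilpotent n d1 d2 X \<Longrightarrow> block_triangular arr d1 d2 F
    \<Longrightarrow> h (unip_conj arr (\<lambda>v. d1 v + d2 v) X F) = 0"
  and vanishes_on_conjugates_polyfun: "vanishes_on_conjugates n arr d1 d2 h \<Longrightarrow> polyfun h"
  by (simp_all add: vanishes_on_conjugates_def)

lemma dderiv_upper_part_eq_0:
  assumes "vanishes_on_conjugates n arr d1 d2 h" "block_triangular arr d1 d2 F"
      "block_triangular arr d1 d2 W"
  shows "dderiv h F W = 0"
proof (rule dderiv_eq_0_if_vanishes_on_line)
  show "polyfun h" using assms(1) by (rule vanishes_on_conjugates_polyfun)
  fix t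
  have "h (unip_conj arr (\<lambda>v. d1 v + d2 v) 0 (line F W t)) = 0"
    using assms(1) lower_nilpotent_zero block_triangular_line[OF assms(2,3)]
    by (rule vanishes_on_conjugatesD)
  then show "h (line F W t) = 0" by (simp add: unip_conj_zero)
qed

definition lower_embed :: "(nat \<Rightarrow> nat) \<Rightarrow> 'k::field_char_0 fam \<Rightarrow> 'k fam" where
  "lower_embed d1 \<phi> = (\<lambda>v i j. if d1 v \<le> i then \<phi> v (i - d1 v) j else 0)"

lemma lower_nilpotent_lower_embed:
  assumes "\<phi> \<in> vmaps n d1 d2"
  shows "lower_nilpotent n d1 d2 (lower_embed d1 \<phi>)"
proof -
  have "v < n \<and> d1 v \<le> i \<and> i < d1 v + d2 v \<and> j < d1 v" if "lower_embed d1 \<phi> v i j \<noteq> 0" for v i j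
  proof -
    from that have "d1 v \<le> i" "\<phi> v (i - d1 v) j \<noteq> 0" by (auto simp: lower_embed_def split:
        if_splits)
    moreover from this have "v < n \<and> i - d1 v < d2 v \<and> j < d1 v"
      using vmaps_zero[OF assms, of v "i - d1 v" j] by blast
    ultimately show ?thesis by linarith
  qed
  note K = this
  show ?thesis
    unfolding lower_nilpotent_def vmaps_def mem_Collect_eq
  proof (intro conjI)
    show "\<forall>v i j. \<not> (v < n \<and> i < d1 v + d2 v \<and> j < d1 v + d2 v) \<longrightarrow> lower_embed d1 \<phi> v i j = 0"
    proof (intro allI impI)
      fix v i j assume "\<not> (v < n \<and> i < d1 v + d2 v \<and> j < d1 v + d2 v)"
      then show "lower_embed d1 \<phi> v i j = 0"
        using K[of v i j] by (cases "lower_embed d1 \<phi> v i j = 0") auto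
    qed
    show "\<forall>v i j. lower_embed d1 \<phi> v i j \<noteq> 0 \<longrightarrow> d1 v \<le> i \<and> j < d1 v"
      using K by blast
  qed
qed

lemma sum_lower_embed_mult:
  assumes "block_triangular arr d1 d2 G" "\<phi> \<in> vmaps n d1 d2"
    and "d1 (snd (arr!al)) \<le> i" "j < d1 (fst (arr!al))"
  shows "(\<Sum>l<d1 (snd (arr!al)) + d2 (snd (arr!al)). lower_embed d1 \<phi> (snd (arr!al)) i l * G al l j)
    = (\<Sum>l<d1 (snd (arr!al)). \<phi> (snd (arr!al)) (i - d1 (snd (arr!al))) l * sub_block arr d1 G al l
      j)"
proof -
  let ?t = "snd (arr!al)"
  have "(\<Sum>l<d2 ?t. lower_embed d1 \<phi> ?t i (l + d1 ?t) * G al (l + d1 ?t) j) = 0"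
    using vmaps_zero[OF assms(2)] assms(3) by (intro sum.neutral) (auto simp: lower_embed_def)
  moreover have "(\<Sum>l<d1 ?t. lower_embed d1 \<phi> ?t i l * G al l j)
      = (\<Sum>l<d1 ?t. \<phi> ?t (i - d1 ?t) l * sub_block arr d1 G al l j)"
    using assms(3,4) by (intro sum.cong) (auto simp: lower_embed_def sub_block_def)
  ultimately show ?thesis by (simp add: sum_lessThan_add_split)
qed

lemma sum_mult_lower_embed:
  assumes "block_triangular arr d1 d2 G" "d1 (snd (arr!al)) \<le> i"
  shows "(\<Sum>l<d1 (fst (arr!al)) + d2 (fst (arr!al)). G al i l * lower_embed d1 \<phi> (fst (arr!al)) l j)
    = (\<Sum>l<d2 (fst (arr!al)). quot_block arr d1 d2 G al (i - d1 (snd (arr!al))) l * \<phi> (fst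
      (arr!al)) l j)"
proof -
  let ?t = "snd (arr!al)" and ?s = "fst (arr!al)"
  have "G al i (l + d1 ?s) = quot_block arr d1 d2 G al (i - d1 ?t) l" if "l < d2 ?s" for l
  proof (cases "i - d1 ?t < d2 ?t")
    case True
    then show ?thesis using assms(2) that by (simp add: quot_block_def)
  next
    case False
    then have "\<not> i < d1 ?t + d2 ?t" using assms(2) by linarith
    then show ?thesis
      using is_rep_zero[OF block_triangular_is_rep[OF assms(1)], of al i] False by (simp add:
        quot_block_def)
  qed
  then have "(\<Sum>l<d2 ?s. G al i (l + d1 ?s) * lower_embed d1 \<phi> ?s (l + d1 ?s) j)
      = (\<Sum>l<d2 ?s. quot_block arr d1 d2 G al (i - d1 ?t) l * \<phi> ?s l j)"
    by (intro sum.cong) (auto simp: lower_embed_def)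
  moreover have "(\<Sum>l<d1 ?s. G al i l * lower_embed d1 \<phi> ?s l j) = 0"
    by (intro sum.neutral) (auto simp: lower_embed_def)
  ultimately show ?thesis by (simp add: sum_lessThan_add_split)
qed

text \<open>The lower left block of the infinitesimal conjugation of \<open>G\<close> by \<open>\<phi>\<close> is \<open>\<delta>(\<phi>)\<close>
  for the diagonal blocks of \<open>G\<close>.\<close>

lemma lower_part_lie_action:
  assumes G: "block_triangular arr d1 d2 G" and \<phi>: "\<phi> \<in> vmaps n d1 d2"
  shows "lower_part arr d1 (lie_action arr (\<lambda>v. d1 v + d2 v) (lower_embed d1 \<phi>) G) al i j
    = (if d1 (snd (arr!al)) \<le> i \<and> j < d1 (fst (arr!al))
       then delta arr d1 d2 (sub_block arr d1 G) (quot_block arr d1 d2 G) \<phi> al (i - d1 (snd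
           (arr!al))) j
       else 0)"
proof (cases "d1 (snd (arr!al)) \<le> i \<and> j < d1 (fst (arr!al))")
  case True
  let ?t = "snd (arr!al)" and ?s = "fst (arr!al)" and ?i = "i - d1 (snd (arr!al))"
  have "delta arr d1 d2 (sub_block arr d1 G) (quot_block arr d1 d2 G) \<phi> al ?i j
     = (\<Sum>l<d1 ?t. \<phi> ?t ?i l * sub_block arr d1 G al l j)
       - (\<Sum>l<d2 ?s. quot_block arr d1 d2 G al ?i l * \<phi> ?s l j)"
  proof (cases "al < length arr \<and> ?i < d2 ?t")
    case False
    have G0: "G al i' j' = 0" if "\<not> al < length arr" for i' j'
      using is_rep_zero[OF block_triangular_is_rep[OF G]] that by simp
    have "\<phi> ?t ?i l = 0" if "\<not> ?i < d2 ?t" for l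
      using vmaps_zero[OF \<phi>] that by simp
    then have "(\<Sum>l<d1 ?t. \<phi> ?t ?i l * sub_block arr d1 G al l j) = 0"
      "(\<Sum>l<d2 ?s. quot_block arr d1 d2 G al ?i l * \<phi> ?s l j) = 0"
      using False G0 by (auto simp: sub_block_def quot_block_def intro!: sum.neutral)
    moreover have "delta arr d1 d2 (sub_block arr d1 G) (quot_block arr d1 d2 G) \<phi> al ?i j = 0"
      unfolding delta_def using False by auto
    ultimately show ?thesis by simp
  qed (use True in \<open>simp add: delta_apply\<close>)
  then show ?thesis
    using True sum_lower_embed_mult[OF G \<phi>] sum_mult_lower_embed[OF G]
    by (simp add: lower_part_def lie_action_def mmult_def)
qed (auto simp: lower_part_def)

definition corner_block ::
  "(nat \<times> nat) list \<Rightarrow> (nat \<Rightarrow> nat) \<Rightarrow> (nat \<Rightarrow> nat) \<Rightarrow> 'k::field fam \<Rightarrow> 'k fam" where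
  "corner_block arr d1 d2 w = (\<lambda>al i j. if j < d1 (fst (arr!al)) \<and> i < d2 (snd (arr!al))
      then w al (i + d1 (snd (arr!al))) j else 0)"

lemma arrow_fam_corner_block:
  "is_rep arr (\<lambda>v. d1 v + d2 v) w \<Longrightarrow> arrow_fam arr d1 d2 (corner_block arr d1 d2 w)"
  unfolding arrow_fam_def corner_block_def is_rep_def by auto

lemma lower_part_lie_action_eq:
  assumes "block_triangular arr d1 d2 G" "is_rep arr (\<lambda>v. d1 v + d2 v) w" "\<phi> \<in> vmaps n d1 d2"
    and "delta arr d1 d2 (sub_block arr d1 G) (quot_block arr d1 d2 G) \<phi> = corner_block arr d1 d2 w"
  shows "lower_part arr d1 (lie_action arr (\<lambda>v. d1 v + d2 v) (lower_embed d1 \<phi>) G)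
      = lower_part arr d1 w"
proof (intro ext)
  fix al i j
  have "w al i j = 0" if "\<not> i < d1 (snd (arr!al)) + d2 (snd (arr!al))"
    using assms(2) that by (auto simp: is_rep_def)
  then show "lower_part arr d1 (lie_action arr (\<lambda>v. d1 v + d2 v) (lower_embed d1 \<phi>) G) al i j
      = lower_part arr d1 w al i j"
    unfolding lower_part_lie_action[OF assms(1,3)] assms(4)
    by (auto simp: lower_part_def corner_block_def)
qed

lemma dderiv_lie_action_eq_0:
  assumes V: "vanishes_on_conjugates n arr d1 d2 h"
    and G: "block_triangular arr d1 d2 G" and Y: "lower_nilpotent n d1 d2 Y"
  shows "dderiv h G (lie_action arr (\<lambda>v. d1 v + d2 v) Y G) = 0"
proof -
  let ?p = "\<lambda>al i j. [:G al i j, lie_action arr (\<lambda>v. d1 v + d2 v) Y G al i j,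
      - lie_square arr (\<lambda>v. d1 v + d2 v) Y G al i j:]"
  have "h (poly_curve ?p t) = 0" for t
  proof -
    have "h (unip_conj arr (\<lambda>v. d1 v + d2 v) (\<lambda>v. mscale t (Y v)) G) = 0"
      using vanishes_on_conjugatesD[OF V lower_nilpotent_mscale[OF Y] G] .
    then show ?thesis by (simp only: unip_conj_scaled)
  qed
  then have "dderiv h (curve_coeff ?p 0) (curve_coeff ?p 1) = 0"
    by (rule dderiv_eq_0_if_vanishes_on_curve[OF vanishes_on_conjugates_polyfun[OF V]])
  then show ?thesis by (simp only: curve_coeff_0_unip_conj curve_coeff_1_unip_conj)
qed

lemma dderiv_lower_part_eq_0:
  assumes V: "vanishes_on_conjugates n arr d1 d2 h" and G: "block_triangular arr d1 d2 G"
    and w: "is_rep arr (\<lambda>v. d1 v + d2 v) w"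
    and surj: "delta_surj n arr d1 d2 (sub_block arr d1 G) (quot_block arr d1 d2 G)"
  shows "dderiv h G (lower_part arr d1 w) = 0"
proof -
  obtain \<phi> where \<phi>: "\<phi> \<in> vmaps n d1 d2"
    "delta arr d1 d2 (sub_block arr d1 G) (quot_block arr d1 d2 G) \<phi> = corner_block arr d1 d2 w"
    using surj arrow_fam_corner_block[OF w] unfolding delta_surj_def by blast
  define C where "C = lie_action arr (\<lambda>v. d1 v + d2 v) (lower_embed d1 \<phi>) G"
  have Y: "lower_nilpotent n d1 d2 (lower_embed d1 \<phi>)"
    by (rule lower_nilpotent_lower_embed[OF \<phi>(1)])
  have "is_rep arr (\<lambda>v. d1 v + d2 v) C"
    unfolding C_def using G lower_nilpotent_vmaps[OF Y]
    by (intro is_rep_lie_action) (auto simp: block_triangular_def)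
  then have "dderiv h G (upper_part arr d1 C) = 0"
    using dderiv_upper_part_eq_0[OF V G] block_triangular_upper_part by blast
  moreover have "dderiv h G C = dderiv h G (upper_part arr d1 C) + dderiv h G (lower_part arr d1 C)"
    using V dderiv_add_direction[of h G "upper_part arr d1 C" "lower_part arr d1 C"]
    by (simp add: upper_part_add_lower_part vanishes_on_conjugates_polyfun)
  moreover have "dderiv h G C = 0"
    unfolding C_def by (rule dderiv_lie_action_eq_0[OF V G Y])
  moreover have "lower_part arr d1 C = lower_part arr d1 w"
    unfolding C_def by (rule lower_part_lie_action_eq[OF G w \<phi>])
  ultimately show ?thesis by simp
qed

lemma dderiv_eq_0_at_block_triangular:
  fixes h g0 :: "'k::field_char_0 fam \<Rightarrow> 'k"
  assumes V: "vanishes_on_conjugates n arr d1 d2 h"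
    and F: "block_triangular arr d1 d2 F" and w: "is_rep arr (\<lambda>v. d1 v + d2 v) w"
    and g0: "polyfun g0" "block_triangular arr d1 d2 G0" "g0 G0 \<noteq> 0"
    and surj: "\<And>G. g0 G \<noteq> 0 \<Longrightarrow> delta_surj n arr d1 d2 (sub_block arr d1 G) (quot_block arr d1 d2 G)"
  shows "dderiv h F w = 0"
proof -
  have h: "polyfun h" using V by (rule vanishes_on_conjugates_polyfun)
  have "dderiv h F (upper_part arr d1 w) = 0"
    by (rule dderiv_upper_part_eq_0[OF V F block_triangular_upper_part[OF w]])
  moreover have "dderiv h F (lower_part arr d1 w) = 0"
  proof (rule polyfun_zero_if_zero_where_nonzero[OF line_closed_block_triangular g0(1)
    polyfun_dderiv[OF h]])
    show "G0 \<in> {F. block_triangular arr d1 d2 F}" "F \<in> {F. block_triangular arr d1 d2 F}"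
      using g0(2) F by simp_all
    show "g0 G0 \<noteq> 0" by (rule g0(3))
    fix G assume "G \<in> {F. block_triangular arr d1 d2 F}" "g0 G \<noteq> 0"
    then show "dderiv h G (lower_part arr d1 w) = 0"
      using dderiv_lower_part_eq_0[OF V _ w surj] by simp
  qed
  ultimately show ?thesis
    using dderiv_add_direction[OF h, of F "upper_part arr d1 w" "lower_part arr d1 w"]
    by (simp add: upper_part_add_lower_part)
qed

lemma vanishes_on_conjugates_unip_conj:
  fixes h :: "'k::field_char_0 fam \<Rightarrow> 'k"
  assumes V: "vanishes_on_conjugates n arr d1 d2 h" and X: "lower_nilpotent n d1 d2 X"
  shows "vanishes_on_conjugates n arr d1 d2 (\<lambda>G. h (unip_conj arr (\<lambda>v. d1 v + d2 v) X G))"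
  unfolding vanishes_on_conjugates_def
proof (intro conjI allI impI)
  have "polyfun h" using V by (rule vanishes_on_conjugates_polyfun)
  then show "polyfun (\<lambda>G. h (unip_conj arr (\<lambda>v. d1 v + d2 v) X G))"
    by (rule polyfun_compose[OF _ polyfun_unip_conj])
  fix Y G :: "'k fam" assume Y: "lower_nilpotent n d1 d2 Y" and G: "block_triangular arr d1 d2 G"
  have "h (unip_conj arr (\<lambda>v. d1 v + d2 v) (X + Y) G) = 0"
    using vanishes_on_conjugatesD[OF V lower_nilpotent_add[OF X Y] G] .
  then show "h (unip_conj arr (\<lambda>v. d1 v + d2 v) X (unip_conj arr (\<lambda>v. d1 v + d2 v) Y G)) = 0"
    by (simp only: unip_conj_comp[OF X Y])
qed

lemma dderiv_unip_conj:
  assumes "lower_nilpotent n d1 d2 X"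
  shows "dderiv (\<lambda>G. h (unip_conj arr (\<lambda>v. d1 v + d2 v) X G)) F
      (unip_conj arr (\<lambda>v. d1 v + d2 v) (- X) w)
    = dderiv h (unip_conj arr (\<lambda>v. d1 v + d2 v) X F) w"
  unfolding dderiv_def unip_conj_line unip_conj_inv_right[OF assms] ..

lemma vanishes_on_conjugates_dderiv:
  fixes h g0 :: "'k::field_char_0 fam \<Rightarrow> 'k"
  assumes V: "vanishes_on_conjugates n arr d1 d2 h" and w: "is_rep arr (\<lambda>v. d1 v + d2 v) w"
    and g0: "polyfun g0" "block_triangular arr d1 d2 G0" "g0 G0 \<noteq> 0"
    and surj_blocks: "\<And>G. g0 G \<noteq> 0 \<Longrightarrow> delta_surj n arr d1 d2 (sub_block arr d1 G)
        (quot_block arr d1 d2 G)"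
  shows "vanishes_on_conjugates n arr d1 d2 (\<lambda>E. dderiv h E w)"
  unfolding vanishes_on_conjugates_def
proof (intro conjI allI impI)
  have "polyfun h" using V by (rule vanishes_on_conjugates_polyfun)
  then show "polyfun (\<lambda>E. dderiv h E w)" by (rule polyfun_dderiv)
  fix X F :: "'k fam" assume X: "lower_nilpotent n d1 d2 X" and F: "block_triangular arr d1 d2 F"
  have "is_rep arr (\<lambda>v. d1 v + d2 v) (unip_conj arr (\<lambda>v. d1 v + d2 v) (- X) w)"
    using is_rep_unip_conj[OF w lower_nilpotent_vmaps[OF lower_nilpotent_uminus[OF X]]] .
  then have "dderiv (\<lambda>G. h (unip_conj arr (\<lambda>v. d1 v + d2 v) X G)) F
      (unip_conj arr (\<lambda>v. d1 v + d2 v) (- X) w) = 0"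
    by (rule dderiv_eq_0_at_block_triangular[OF vanishes_on_conjugates_unip_conj[OF V X] F _
          g0(1-3) surj_blocks])
  then show "dderiv h (unip_conj arr (\<lambda>v. d1 v + d2 v) X F) w = 0"
    unfolding dderiv_unip_conj[OF X] .
qed

lemma vanishes_on_conjugates_dderiv_iter:
  fixes h g0 :: "'k::field_char_0 fam \<Rightarrow> 'k"
  assumes "vanishes_on_conjugates n arr d1 d2 h" "is_rep arr (\<lambda>v. d1 v + d2 v) w"
    and "polyfun g0" "g0 G0 \<noteq> 0"
    and "\<And>G. g0 G \<noteq> 0 \<Longrightarrow> delta_surj n arr d1 d2 (sub_block arr d1 G) (quot_block arr d1 d2 G)"
    and "block_triangular arr d1 d2 G0"
  shows "vanishes_on_conjugates n arr d1 d2 (dderiv_iter w h k)"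
proof (induction k)
  case 0
  then show ?case using assms(1) by simp
next
  case (Suc k)
  then show ?case
    using vanishes_on_conjugates_dderiv[OF _ assms(2,3,6,4,5)] by simp
qed

text \<open>This is where the generic subrepresentation comes from: if \<open>ext(d\<^sub>1, d\<^sub>2) = 0\<close>,
  the unipotent conjugates of the block-triangular representations are Zariski dense. A polynomial
  \<open>f\<close> vanishing on them has all iterated derivatives at \<open>0\<close> vanishing in every direction,
  because vanishing on the conjugates is inherited by directional derivatives.\<close>

lemma conjugates_of_block_triangular_dense:
  fixes f :: "'k::field_char_0 fam \<Rightarrow> 'k" and M0 N0 E :: "'k fam"
  assumes M0: "is_rep arr d1 M0" and N0: "is_rep arr d2 N0" and s0: "delta_surj n arr d1 d2 M0 N0"
    and f: "polyfun f" and E: "is_rep arr (\<lambda>v. d1 v + d2 v) E" "f E \<noteq> 0"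
  shows "\<exists>X F. lower_nilpotent n d1 d2 X \<and> block_triangular arr d1 d2 F
      \<and> f (unip_conj arr (\<lambda>v. d1 v + d2 v) X F) \<noteq> 0"
proof (rule ccontr)
  assume "\<not> ?thesis"
  then have V: "vanishes_on_conjugates n arr d1 d2 f"
    using f unfolding vanishes_on_conjugates_def by blast
  have G0: "block_triangular arr d1 d2 (dsum arr d1 M0 N0)"
    by (rule block_triangular_dsum[OF M0 N0])
  have "delta_surj n arr d1 d2 (sub_block arr d1 (dsum arr d1 M0 N0))
      (quot_block arr d1 d2 (dsum arr d1 M0 N0))"
    unfolding sub_block_dsum[OF M0] quot_block_dsum[OF N0] by (rule s0)
  then obtain g0 where g0: "polyfun g0" "g0 (dsum arr d1 M0 N0) \<noteq> 0"
      "\<And>G. g0 G \<noteq> 0 \<Longrightarrow> delta_surj n arr d1 d2 (sub_block arr d1 G) (quot_block arr d1 d2 G)"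
    using delta_surj_open[of "sub_block arr d1" "quot_block arr d1 d2", OF polyfun_sub_block
        polyfun_quot_block] by blast
  have VK: "vanishes_on_conjugates n arr d1 d2 (dderiv_iter E f k)" for k
    using V E(1) g0 G0 by (rule vanishes_on_conjugates_dderiv_iter)
  have "dderiv_iter E f k (unip_conj arr (\<lambda>v. d1 v + d2 v) 0 0) = 0" for k
    using vanishes_on_conjugatesD[OF VK lower_nilpotent_zero block_triangular_zero] .
  then have "dderiv_iter E f k 0 = 0" for k
    by (simp only: unip_conj_zero)
  then have "f (line 0 E 1) = 0"
    by (rule polyfun_zero_if_dderiv_iter_zero[OF f])
  then show False using E(2) by (simp add: line_def)
qed

lemma ext_gen_eq_0_sub:
  assumes "ext_gen TYPE('k::field_char_0) n arr d1 d2 = 0"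
    and "ext_gen TYPE('k) n arr (\<lambda>v. d1 v + d2 v) b = 0"
  shows "ext_gen TYPE('k) n arr d1 b = 0"
proof -
  let ?d = "\<lambda>v. d1 v + d2 v"
  obtain M0 N0 E0 A :: "'k fam" where M0: "is_rep arr d1 M0" "is_rep arr d2 N0"
      "delta_surj n arr d1 d2 M0 N0"
    and E0: "is_rep arr ?d E0" "is_rep arr b A" "delta_surj n arr ?d b E0 A"
    using assms unfolding ext_gen_eq_0_iff by blast
  obtain g where g: "polyfun g" "g E0 \<noteq> 0" "\<And>F. g F \<noteq> 0 \<Longrightarrow> delta_surj n arr ?d b F A"
    using delta_surj_open[of "\<lambda>F. F" "\<lambda>F. A", OF polyfun_entry polyfun_const E0(3)] by blast
  obtain X F where XF: "lower_nilpotent n d1 d2 X" "block_triangular arr d1 d2 F"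
    "g (unip_conj arr ?d X F) \<noteq> 0"
    using conjugates_of_block_triangular_dense[OF M0 g(1) E0(1) g(2)] by blast
  have F: "is_rep arr ?d F" using XF(2) by (simp add: block_triangular_def)
  have "delta_surj n arr ?d b F A"
    using delta_surj_source_if_unip_conj[OF XF(1) F E0(2) g(3)[OF XF(3)]] .
  then have "delta_surj n arr d1 b (sub_block arr d1 F) A" by (rule delta_surj_sub_block[OF XF(2)])
  then show ?thesis unfolding ext_gen_eq_0_iff using is_rep_sub_block[OF F] E0(2) by blast
qed

lemma ext_gen_eq_0_quot:
  assumes "ext_gen TYPE('k::field_char_0) n arr d1 d2 = 0"
    and "ext_gen TYPE('k) n arr b (\<lambda>v. d1 v + d2 v) = 0"
  shows "ext_gen TYPE('k) n arr b d2 = 0"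
proof -
  let ?d = "\<lambda>v. d1 v + d2 v"
  obtain M0 N0 E0 A :: "'k fam" where M0: "is_rep arr d1 M0" "is_rep arr d2 N0"
      "delta_surj n arr d1 d2 M0 N0"
    and E0: "is_rep arr ?d E0" "is_rep arr b A" "delta_surj n arr b ?d A E0"
    using assms unfolding ext_gen_eq_0_iff by blast
  obtain g where g: "polyfun g" "g E0 \<noteq> 0" "\<And>F. g F \<noteq> 0 \<Longrightarrow> delta_surj n arr b ?d A F"
    using delta_surj_open[of "\<lambda>F. A" "\<lambda>F. F", OF polyfun_const polyfun_entry E0(3)] by blast
  obtain X F where XF: "lower_nilpotent n d1 d2 X" "block_triangular arr d1 d2 F"
    "g (unip_conj arr ?d X F) \<noteq> 0"
    using conjugates_of_block_triangular_dense[OF M0 g(1) E0(1) g(2)] by blast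
  have F: "is_rep arr ?d F" using XF(2) by (simp add: block_triangular_def)
  have "delta_surj n arr b ?d A F"
    using delta_surj_target_if_unip_conj[OF XF(1) F E0(2) g(3)[OF XF(3)]] .
  then have "delta_surj n arr b d2 A (quot_block arr d1 d2 F)"
    by (rule delta_surj_quot_block[OF XF(2)])
  then show ?thesis unfolding ext_gen_eq_0_iff using is_rep_quot_block[OF F] E0(2) by blast
qed

lemma generic_decomp_split:
  assumes "generic_decomp TYPE('k::field_char_0) n arr d s ds" "j < s"
  defines "c \<equiv> \<lambda>v. \<Sum>l\<in>{..<s} - {j}. ds l v"
  shows "d = (\<lambda>v. ds j v + c v)"
    and "ext_gen TYPE('k) n arr (ds j) c = 0" and "ext_gen TYPE('k) n arr c (ds j) = 0"
proof -
  have "(\<Sum>l<s. ds l v) = ds j v + c v" for v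
    using assms(2) by (simp add: c_def sum.remove)
  then show "d = (\<lambda>v. ds j v + c v)"
    using assms(1) by (auto simp: generic_decomp_def)
  have "ext_gen TYPE('k) n arr (ds j) (ds l) = 0 \<and> ext_gen TYPE('k) n arr (ds l) (ds j) = 0"
    if "l \<in> {..<s} - {j}" for l
    using assms(1,2) that unfolding generic_decomp_def by blast
  then show "ext_gen TYPE('k) n arr (ds j) c = 0" "ext_gen TYPE('k) n arr c (ds j) = 0"
    unfolding c_def by (intro ext_gen_sum_target ext_gen_sum_source; auto)+
qed

theorem mainTheorem14:
  fixes n :: nat and arr :: "(nat \<times> nat) list" and r :: nat
    and \<alpha> :: "nat \<Rightarrow> nat \<Rightarrow> nat" and \<alpha>1' :: "nat \<Rightarrow> nat"
    and s :: nat and ds :: "nat \<Rightarrow> nat \<Rightarrow> nat"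
  assumes "alg_closed TYPE('k::field_char_0)"
    and "quiver n arr" and "quiver_connected n arr" and "quiver_acyclic arr"
    and "1 \<le> r"
    and "\<forall>i\<in>{1..r}. schur_root TYPE('k) n arr (\<alpha> i)"
    and "\<forall>i\<in>{1..r}. \<forall>j\<in>{1..r}. i \<noteq> j \<longrightarrow> ext_orth TYPE('k) n arr (\<alpha> i) (\<alpha> j)"
    and "schur_root TYPE('k) n arr \<alpha>1'"
    and "\<alpha>1' \<noteq> \<alpha> 1"
    and "\<forall>i\<in>{2..r}. ext_orth TYPE('k) n arr \<alpha>1' (\<alpha> i)"
    and "ext_gen TYPE('k) n arr (\<alpha> 1) \<alpha>1' \<noteq> 0"
    and "generic_decomp TYPE('k) n arr (\<lambda>v. \<alpha> 1 v + \<alpha>1' v) s ds"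
  shows "\<forall>j<s. ds j \<noteq> \<alpha> 1 \<and> ds j \<noteq> \<alpha>1' \<and>
           (\<forall>i\<in>{2..r}. ext_orth TYPE('k) n arr (ds j) (\<alpha> i))"
proof (intro allI impI conjI ballI)
  fix j assume "j < s"
  define c where "c = (\<lambda>v. \<Sum>l\<in>{..<s} - {j}. ds l v)"
  have sum: "(\<lambda>v. \<alpha> 1 v + \<alpha>1' v) = (\<lambda>v. ds j v + c v)"
    and jc: "ext_gen TYPE('k) n arr (ds j) c = 0" and cj: "ext_gen TYPE('k) n arr c (ds j) = 0"
    using generic_decomp_split[OF assms(12) \<open>j < s\<close>] unfolding c_def by blast+
  show "ds j \<noteq> \<alpha> 1"
  proof
    assume "ds j = \<alpha> 1"
    with sum have "c = \<alpha>1'" by (simp add: fun_eq_iff)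
    with jc assms(11) \<open>ds j = \<alpha> 1\<close> show False by simp
  qed
  show "ds j \<noteq> \<alpha>1'"
  proof
    assume "ds j = \<alpha>1'"
    with sum have "c = \<alpha> 1" by (simp add: fun_eq_iff)
    with cj assms(11) \<open>ds j = \<alpha>1'\<close> show False by simp
  qed
  fix i assume "i \<in> {2..r}"
  then have "ext_orth TYPE('k) n arr (\<alpha> 1) (\<alpha> i)" "ext_orth TYPE('k) n arr \<alpha>1' (\<alpha> i)"
    using assms(5,7,10) by auto
  then have "ext_gen TYPE('k) n arr (\<lambda>v. \<alpha> 1 v + \<alpha>1' v) (\<alpha> i) = 0"
    and "ext_gen TYPE('k) n arr (\<alpha> i) (\<lambda>v. \<alpha> 1 v + \<alpha>1' v) = 0"
    by (simp_all add: ext_orth_def ext_gen_add_source ext_gen_add_target)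
  moreover have "(\<lambda>v. \<alpha> 1 v + \<alpha>1' v) = (\<lambda>v. c v + ds j v)"
    using sum by (simp add: fun_eq_iff)
  ultimately show "ext_orth TYPE('k) n arr (ds j) (\<alpha> i)"
    unfolding ext_orth_def using ext_gen_eq_0_sub[OF jc] ext_gen_eq_0_quot[OF cj] sum by simp
qed

end
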